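(* In the setting below, suppose that the operator $K$ has a subinvariant density $f_*$ (i.e. $f_*\in D(m)$ and $Kf_*\le f_*$), and let \[ \overline{f}_*=\sup_{\lambda>0}R(\lambda,A)f_* \] (a pointwise a.e. monotone limit as $\lambda\downarrow0$). Then $\overline f_*$ is subinvariant for the semigroup $\{P(t)\}_{t\ge0}$. In particular, if $\overline f_*\in L^1$ and $\{P(t)\}_{t\ge0}$ is stochastic, then $\{P(t)\}_{t\ge0}$ has an invariant density.
   Context: Setting: $(E,\mathcal{E},m)$ is a $\sigma$-finite measure space, $L^1=L^1(E,\mathcal{E},m)$, $L^1_+$ its nonnegative elements, $D(m)=\{f\in L^1_+:\|f\|=1\}$ the densities. A linear operator on $L^1$ is stochastic if it maps $D(m)$ into $D(m)$, substochastic if it is a positive contraction; a (sub)stochastic semigroup is a $C_0$-semigroup of (sub)stochastic operators. A substochastic operator $Q$ is extended to nonnegative measurable $f=\sup_n f_n$ ($0\le f_n\uparrow$, $f_n\in L^1_+$) by $Qf=\sup_nQf_n$ (possibly $+\infty$); $f\ge0$ measurable is subinvariant (invariant) for $Q$ if $Qf\le f$ ($Qf=f$), and for a semigroup if this holds for each $P(t)$. Let $P$ be a stochastic operator on $L^1$, $\varphi\colon E\to[0,\infty)$ measurable, and $\{S(t)\}_{t\ge0}$ a substochastic semigroup with generator $(A,\mathcal{D}(A))$ such that $\mathcal{D}(A)\subseteq L^1_\varphi=\{f\in L^1:\int\varphi|f|\,dm<\infty\}$ and $\int_E Af\,dm=-\int_E\varphi f\,dm$ for all $f\in\mathcal{D}(A)\cap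 L^1_+$. $R(\lambda,A)=(\lambda-A)^{-1}=\int_0^\infty e^{-\lambda s}S(s)\,ds$ for $\lambda>0$. The minimal semigroup $\{P(t)\}_{t\ge0}$ is the substochastic semigroup whose generator $(\mathcal{C},\mathcal{D}(\mathcal{C}))$ is given by $R(\lambda,\mathcal{C})f=\lim_{n\to\infty}R(\lambda,A)\sum_{k=0}^n(P(\varphi R(\lambda,A)))^kf$ for $f\in L^1$, $\lambda>0$; it satisfies $\mathcal{D}(A)\subseteq\mathcal{D}(\mathcal{C})$ and $\mathcal{C}f=Af+P(\varphi f)$ for $f\in\mathcal{D}(A)$. The substochastic operator $K$ on $L^1$ is $Kf=\lim_{\lambda\downarrow0}P(\varphi R(\lambda,A))f$. *)

theory Defs
  imports "HOL-Analysis.Analysis"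
begin

text \<open>Elements of L^1(E,m) are represented by integrable real functions on the
measure space M; everything is understood up to M-a.e. equality. Operators on
L^1 are maps of type (a => real) => (a => real), required to respect a.e. equality.\<close>

definition l1norm :: "'a measure \<Rightarrow> ('a \<Rightarrow> real) \<Rightarrow> real" where
  "l1norm M f = (LINT x|M. \<bar>f x\<bar>)"

definition is_density :: "'a measure \<Rightarrow> ('a \<Rightarrow> real) \<Rightarrow> bool" where
  "is_density M f \<longleftrightarrow> integrable M f \<and> (AE x in M. 0 \<le> f x) \<and> integral\<^sup>L M f = 1"

definition l1_lim :: "'a measure \<Rightarrow> ('b \<Rightarrow> 'a \<Rightarrow> real) \<Rightarrow> ('a \<Rightarrow> real) \<Rightarrow> 'b filter \<Rightarrow> bool" where
  "l1_lim M g L F \<longleftrightarrow> integrable M L \<and> (\<forall>\<^sub>F t in F. integrable M (g t))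
     \<and> ((\<lambda>t. l1norm M (\<lambda>x. g t x - L x)) \<longlongrightarrow> 0) F"

definition substochastic_op :: "'a measure \<Rightarrow> (('a \<Rightarrow> real) \<Rightarrow> ('a \<Rightarrow> real)) \<Rightarrow> bool" where
  "substochastic_op M T \<longleftrightarrow>
     (\<forall>f. integrable M f \<longrightarrow> integrable M (T f)) \<and>
     (\<forall>f g. integrable M f \<longrightarrow> (AE x in M. f x = g x) \<longrightarrow> (AE x in M. T f x = T g x)) \<and>
     (\<forall>f g a b. integrable M f \<longrightarrow> integrable M g \<longrightarrow>
        (AE x in M. T (\<lambda>y. a * f y + b * g y) x = a * T f x + b * T g x)) \<and>
     (\<forall>f. integrable M f \<longrightarrow> (AE x in M. 0 \<le> f x) \<longrightarrow> (AE x in M. 0 \<le> T f x)) \<and>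
     (\<forall>f. integrable M f \<longrightarrow> l1norm M (T f) \<le> l1norm M f)"

definition stochastic_op :: "'a measure \<Rightarrow> (('a \<Rightarrow> real) \<Rightarrow> ('a \<Rightarrow> real)) \<Rightarrow> bool" where
  "stochastic_op M T \<longleftrightarrow> substochastic_op M T \<and> (\<forall>f. is_density M f \<longrightarrow> is_density M (T f))"

definition substochastic_sg :: "'a measure \<Rightarrow> (real \<Rightarrow> ('a \<Rightarrow> real) \<Rightarrow> ('a \<Rightarrow> real)) \<Rightarrow> bool" where
  "substochastic_sg M S \<longleftrightarrow>
     (\<forall>t\<ge>0. substochastic_op M (S t)) \<and>
     (\<forall>f. integrable M f \<longrightarrow> (AE x in M. S 0 f x = f x)) \<and>
     (\<forall>t s f. 0 \<le> t \<longrightarrow> 0 \<le> s \<longrightarrow> integrable M f \<longrightarrow> (AE x in M. S (t + s) f x = S t (S s f) x)) \<and>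
     (\<forall>f. integrable M f \<longrightarrow> ((\<lambda>t. l1norm M (\<lambda>x. S t f x - f x)) \<longlongrightarrow> 0) (at_right 0))"

definition stochastic_sg :: "'a measure \<Rightarrow> (real \<Rightarrow> ('a \<Rightarrow> real) \<Rightarrow> ('a \<Rightarrow> real)) \<Rightarrow> bool" where
  "stochastic_sg M S \<longleftrightarrow> substochastic_sg M S \<and> (\<forall>t\<ge>0. stochastic_op M (S t))"

text \<open>Generator: has_gen M S f g means f is in D(A) and A f = g.\<close>
definition has_gen :: "'a measure \<Rightarrow> (real \<Rightarrow> ('a \<Rightarrow> real) \<Rightarrow> ('a \<Rightarrow> real)) \<Rightarrow> ('a \<Rightarrow> real) \<Rightarrow> ('a \<Rightarrow> real) \<Rightarrow> bool" where
  "has_gen M S f g \<longleftrightarrow> integrable M f \<and> integrable M g \<and>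
     ((\<lambda>h. l1norm M (\<lambda>x. (S h f x - f x) / h - g x)) \<longlongrightarrow> 0) (at_right 0)"

text \<open>is_res M S l g f: f = R(l,A) g, i.e. f in D(A) and l f - A f = g.\<close>
definition is_res :: "'a measure \<Rightarrow> (real \<Rightarrow> ('a \<Rightarrow> real) \<Rightarrow> ('a \<Rightarrow> real)) \<Rightarrow> real \<Rightarrow> ('a \<Rightarrow> real) \<Rightarrow> ('a \<Rightarrow> real) \<Rightarrow> bool" where
  "is_res M S l g f \<longleftrightarrow> (\<exists>h. has_gen M S f h \<and> (AE x in M. l * f x - h x = g x))"

definition resolvent :: "'a measure \<Rightarrow> (real \<Rightarrow> ('a \<Rightarrow> real) \<Rightarrow> ('a \<Rightarrow> real)) \<Rightarrow> real \<Rightarrow> ('a \<Rightarrow> real) \<Rightarrow> ('a \<Rightarrow> real)" where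
  "resolvent M S l g = (SOME f. is_res M S l g f)"

definition approx_seq :: "'a measure \<Rightarrow> ('a \<Rightarrow> ennreal) \<Rightarrow> (nat \<Rightarrow> 'a \<Rightarrow> real) \<Rightarrow> bool" where
  "approx_seq M f fn \<longleftrightarrow>
     (\<forall>n. integrable M (fn n) \<and> (\<forall>x\<in>space M. 0 \<le> fn n x \<and> fn n x \<le> fn (Suc n) x)) \<and>
     (AE x in M. (SUP n. ennreal (fn n x)) = f x)"

definition ext_op :: "'a measure \<Rightarrow> (('a \<Rightarrow> real) \<Rightarrow> ('a \<Rightarrow> real)) \<Rightarrow> ('a \<Rightarrow> ennreal) \<Rightarrow> ('a \<Rightarrow> ennreal)" where
  "ext_op M T f = (\<lambda>x. SUP n. ennreal (T ((SOME fn. approx_seq M f fn) n) x))"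

definition subinvariant_sg :: "'a measure \<Rightarrow> (real \<Rightarrow> ('a \<Rightarrow> real) \<Rightarrow> ('a \<Rightarrow> real)) \<Rightarrow> ('a \<Rightarrow> ennreal) \<Rightarrow> bool" where
  "subinvariant_sg M P f \<longleftrightarrow> (\<forall>t\<ge>0. AE x in M. ext_op M (P t) f x \<le> f x)"

text \<open>sup over lambda>0 of R(lambda,A) f, realised as the a.e. monotone limit along lambda = 1/(n+1).\<close>
definition resolvent_sup :: "'a measure \<Rightarrow> (real \<Rightarrow> ('a \<Rightarrow> real) \<Rightarrow> ('a \<Rightarrow> real)) \<Rightarrow> ('a \<Rightarrow> real) \<Rightarrow> ('a \<Rightarrow> ennreal)" where
  "resolvent_sup M S f = (\<lambda>x. SUP n::nat. ennreal (resolvent M S (1 / real (Suc n)) f x))"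

end

theory Submission
  imports Defs
begin

text \<open>
  For \<open>\<lambda> > 0\<close> write \<open>B\<^sub>\<lambda> u = P(\<phi> R(\<lambda>,A) u)\<close> (\<open>jump_op \<lambda> u\<close> below). Since \<open>R(\<lambda>,A)\<close> decreases in \<open>\<lambda>\<close> on nonnegative
  functions, \<open>B\<^sub>\<lambda> f\<^sub>* \<le> K f\<^sub>* \<le> f\<^sub>*\<close>, so the defect \<open>w\<^sub>\<lambda> = f\<^sub>* - B\<^sub>\<lambda> f\<^sub>*\<close> is nonnegative.
  The series defining \<open>R(\<lambda>,\<C>) w\<^sub>\<lambda>\<close> telescopes, and its convergence forces the remainder to vanish,
  so \<open>R(\<lambda>,\<C>) w\<^sub>\<lambda> = R(\<lambda>,A) f\<^sub>*\<close>. Thus \<open>R(\<lambda>,A) f\<^sub>*\<close> lies in \<open>\<D>(\<C>)\<close> with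
  \<open>\<C> R(\<lambda>,A) f\<^sub>* = \<lambda> R(\<lambda>,A) f\<^sub>* - w\<^sub>\<lambda> \<le> \<lambda> R(\<lambda>,A) f\<^sub>*\<close>, whence
  \<open>P(t) R(\<lambda>,A) f\<^sub>* \<le> e\<^sup>\<lambda>\<^sup>t R(\<lambda>,A) f\<^sub>*\<close>. Letting \<open>\<lambda> \<down> 0\<close> along a subsequence on which \<open>P(t)\<close> converges a.e.
  gives the subinvariance of \<open>f\<^sub>*\<close>'s resolvent supremum. When it is integrable, its normalisation is a
  subinvariant density, and a subinvariant density of a stochastic operator is invariant.

  Since \<open>R(\<lambda>,A)\<close> is only defined by choice, its existence has to be proved: it is the \<open>L\<^sup>1\<close>-limit of
  dyadic Riemann sums of the Laplace transform \<open>\<integral>\<^sub>0\<^sup>\<infinity> e\<^sup>-\<^sup>\<lambda>\<^sup>s S(s) g ds\<close>.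
\<close>

section \<open>The \<open>L\<^sup>1\<close> seminorm and \<open>L\<^sup>1\<close> convergence\<close>

lemma l1norm_nonneg: "0 \<le> l1norm M f"
  unfolding l1norm_def by simp

lemma l1norm_add_le:
  assumes "integrable M f" "integrable M g"
  shows "l1norm M (\<lambda>x. f x + g x) \<le> l1norm M f + l1norm M g"
proof -
  have "(LINT x|M. \<bar>f x + g x\<bar>) \<le> (LINT x|M. \<bar>f x\<bar> + \<bar>g x\<bar>)"
    using assms by (intro integral_mono) (auto intro!: abs_triangle_ineq)
  also have "\<dots> = (LINT x|M. \<bar>f x\<bar>) + (LINT x|M. \<bar>g x\<bar>)"
    using assms by (intro Bochner_Integration.integral_add) auto
  finally show ?thesis unfolding l1norm_def .
qed

lemma l1norm_add3_le:
  assumes "integrable M a" "integrable M b" "integrable M c"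
  shows "l1norm M (\<lambda>x. a x + b x + c x) \<le> l1norm M a + l1norm M b + l1norm M c"
  using l1norm_add_le[of M "\<lambda>x. a x + b x" c] l1norm_add_le[OF assms(1,2)] assms by auto

lemma l1norm_diff_triangle:
  assumes "integrable M f" "integrable M g" "integrable M h"
  shows "l1norm M (\<lambda>x. f x - h x) \<le> l1norm M (\<lambda>x. f x - g x) + l1norm M (\<lambda>x. g x - h x)"
  using l1norm_add_le[of M "\<lambda>x. f x - g x" "\<lambda>x. g x - h x"] assms by auto

lemma l1norm_cmult: "l1norm M (\<lambda>x. c * f x) = \<bar>c\<bar> * l1norm M f"
  unfolding l1norm_def by (simp add: abs_mult)

lemma l1norm_uminus: "l1norm M (\<lambda>x. - f x) = l1norm M f"
  unfolding l1norm_def by simp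

lemma l1norm_minus_commute: "l1norm M (\<lambda>x. f x - g x) = l1norm M (\<lambda>x. g x - f x)"
  unfolding l1norm_def by (simp add: abs_minus_commute)

lemma l1norm_cong_AE:
  assumes "f \<in> borel_measurable M" "g \<in> borel_measurable M" "AE x in M. f x = g x"
  shows "l1norm M f = l1norm M g"
  unfolding l1norm_def using assms by (intro integral_cong_AE) auto

lemma l1norm_mono:
  assumes "f \<in> borel_measurable M" "integrable M g" "AE x in M. \<bar>f x\<bar> \<le> \<bar>g x\<bar>"
  shows "l1norm M f \<le> l1norm M g"
proof -
  have "integrable M (\<lambda>x. \<bar>f x\<bar>)"
    using assms by (intro Bochner_Integration.integrable_bound[OF assms(2)]) auto
  then show ?thesis
    unfolding l1norm_def using assms by (intro integral_mono_AE) auto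
qed

lemma AE_eq_0_if_l1norm_eq_0:
  assumes "integrable M f" "l1norm M f = 0"
  shows "AE x in M. f x = 0"
  using assms integral_nonneg_eq_0_iff_AE[of M "\<lambda>x. \<bar>f x\<bar>"] unfolding l1norm_def by simp

lemma abs_integral_le_l1norm: "\<bar>integral\<^sup>L M f\<bar> \<le> l1norm M f"
  unfolding l1norm_def using integral_norm_bound[of M f] by simp

lemma nn_integral_abs_eq_l1norm:
  assumes "integrable M f"
  shows "(\<integral>\<^sup>+x. ennreal \<bar>f x\<bar> \<partial>M) = ennreal (l1norm M f)"
  unfolding l1norm_def using assms by (intro nn_integral_eq_integral) auto

lemma AE_nonpos_if_small_majorants:
  assumes v: "integrable M v"
    and small: "\<And>e. e > 0 \<Longrightarrow> \<exists>w. integrable M w \<and> (AE x in M. v x \<le> w x) \<and> l1norm M w < e"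
  shows "AE x in M. v x \<le> 0"
proof -
  have iv: "integrable M (\<lambda>x. max (v x) 0)" using v by auto
  have "(LINT x|M. max (v x) 0) \<le> 0 + e" if e: "e > 0" for e
  proof -
    obtain w where w: "integrable M w" "AE x in M. v x \<le> w x" "l1norm M w < e"
      using small[OF e] by blast
    have "(LINT x|M. max (v x) 0) \<le> (LINT x|M. \<bar>w x\<bar>)"
      using iv w(1) by (intro integral_mono_AE) (use w(2) in \<open>auto elim!: eventually_mono\<close>)
    then show ?thesis using w unfolding l1norm_def by simp
  qed
  moreover have "0 \<le> (LINT x|M. max (v x) 0)" by simp
  ultimately have "(LINT x|M. max (v x) 0) = 0"
    using field_le_epsilon[of "LINT x|M. max (v x) 0" 0] by (meson order_antisym)
  then have "AE x in M. max (v x) 0 = 0"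
    using iv integral_nonneg_eq_0_iff_AE[of M "\<lambda>x. max (v x) 0"] by simp
  then show ?thesis by eventually_elim linarith
qed

lemma l1norm_quotient_split_le:
  assumes "integrable M a" "integrable M b" "integrable M f" "integrable M c" "0 < d" "d \<le> h"
  shows "l1norm M (\<lambda>x. (a x - f x) / h - c x) \<le> l1norm M (\<lambda>x. a x - b x) / h
    + d / h * l1norm M (\<lambda>x. (b x - f x) / d - c x) + (1 - d / h) * l1norm M c"
proof -
  have "(\<lambda>x. (a x - f x) / h - c x)
      = (\<lambda>x. (a x - b x) / h + d / h * ((b x - f x) / d - c x) + (d / h - 1) * c x)"
    using assms(5,6) by (intro ext) (simp add: field_simps)
  then have "l1norm M (\<lambda>x. (a x - f x) / h - c x) \<le> l1norm M (\<lambda>x. (a x - b x) / h)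
      + l1norm M (\<lambda>x. d / h * ((b x - f x) / d - c x)) + l1norm M (\<lambda>x. (d / h - 1) * c x)"
    using assms(1-4) by (simp add: l1norm_add3_le)
  also have "\<dots> = l1norm M (\<lambda>x. a x - b x) / h
      + d / h * l1norm M (\<lambda>x. (b x - f x) / d - c x) + (1 - d / h) * l1norm M c"
    using assms(5,6) unfolding l1norm_cmult by (simp add: l1norm_def abs_of_nonpos)
  finally show ?thesis .
qed

lemma l1_limD:
  assumes "l1_lim M u L F"
  shows "integrable M L" "\<forall>\<^sub>F t in F. integrable M (u t)"
    "((\<lambda>t. l1norm M (\<lambda>x. u t x - L x)) \<longlongrightarrow> 0) F"
  using assms unfolding l1_lim_def by auto

lemma l1_limI:
  assumes "integrable M L" "\<forall>\<^sub>F t in F. integrable M (u t)"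
    "((\<lambda>t. l1norm M (\<lambda>x. u t x - L x)) \<longlongrightarrow> 0) F"
  shows "l1_lim M u L F"
  using assms unfolding l1_lim_def by auto

lemma l1_lim_eventually_close:
  assumes "l1_lim M u L F" "e > 0"
  shows "\<forall>\<^sub>F t in F. integrable M (u t) \<and> l1norm M (\<lambda>x. u t x - L x) < e"
  using eventually_conj[OF l1_limD(2)[OF assms(1)] order_tendstoD(2)[OF l1_limD(3)[OF assms(1)] assms(2)]] .

lemma l1_lim_const: "integrable M g \<Longrightarrow> l1_lim M (\<lambda>t. g) g F"
  unfolding l1_lim_def l1norm_def by simp

lemma l1_lim_cong_AE:
  assumes u: "l1_lim M u L F" and L': "integrable M L'" and eq: "AE x in M. L x = L' x"
    and ev: "\<forall>\<^sub>F t in F. integrable M (v t) \<and> (AE x in M. u t x = v t x)"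
  shows "l1_lim M v L' F"
proof (rule l1_limI[OF L'])
  show "\<forall>\<^sub>F t in F. integrable M (v t)" using ev by (auto elim: eventually_mono)
  have "\<forall>\<^sub>F t in F. l1norm M (\<lambda>x. u t x - L x) = l1norm M (\<lambda>x. v t x - L' x)"
    using ev l1_limD(2)[OF u]
  proof eventually_elim
    case (elim t)
    with eq have "AE x in M. u t x - L x = v t x - L' x" by (auto elim: AE_mp)
    with elim show ?case using l1_limD(1)[OF u] L' by (intro l1norm_cong_AE) auto
  qed
  then show "((\<lambda>t. l1norm M (\<lambda>x. v t x - L' x)) \<longlongrightarrow> 0) F"
    by (rule Lim_transform_eventually[OF l1_limD(3)[OF u]])
qed

lemma l1_lim_AE_le:
  assumes F: "F \<noteq> bot" and u: "l1_lim M u L F" and w: "l1_lim M w W F"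
    and le: "\<forall>\<^sub>F t in F. AE x in M. u t x \<le> w t x"
  shows "AE x in M. L x \<le> W x"
proof -
  have LW: "integrable M L" "integrable M W" using u w by (auto dest: l1_limD)
  have "AE x in M. L x - W x \<le> 0"
  proof (rule AE_nonpos_if_small_majorants)
    show "integrable M (\<lambda>x. L x - W x)" using LW by auto
    fix e :: real assume e: "e > 0"
    have "\<forall>\<^sub>F t in F. (integrable M (u t) \<and> l1norm M (\<lambda>x. u t x - L x) < e/2) \<and>
        (integrable M (w t) \<and> l1norm M (\<lambda>x. w t x - W x) < e/2) \<and> (AE x in M. u t x \<le> w t x)"
      using l1_lim_eventually_close[OF u half_gt_zero[OF e]]
        l1_lim_eventually_close[OF w half_gt_zero[OF e]] le
      by eventually_elim auto
    then obtain t where t: "integrable M (u t)" "l1norm M (\<lambda>x. u t x - L x) < e/2"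
      "integrable M (w t)" "l1norm M (\<lambda>x. w t x - W x) < e/2" "AE x in M. u t x \<le> w t x"
      using eventually_happens'[OF F] by blast
    define v where "v x = (L x - u t x) + (w t x - W x)" for x
    have "l1norm M v \<le> l1norm M (\<lambda>x. L x - u t x) + l1norm M (\<lambda>x. w t x - W x)"
      unfolding v_def using t LW by (intro l1norm_add_le) auto
    also have "\<dots> < e" using t l1norm_minus_commute[of M L "u t"] by simp
    finally have "l1norm M v < e" .
    moreover have "AE x in M. L x - W x \<le> v x" using t(5) unfolding v_def by eventually_elim simp
    moreover have "integrable M v" unfolding v_def using t LW by auto
    ultimately show "\<exists>w. integrable M w \<and> (AE x in M. L x - W x \<le> w x) \<and> l1norm M w < e" by blast
  qed
  then show ?thesis by eventually_elim simp
qed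

lemma l1_lim_AE_ge_const:
  assumes "F \<noteq> bot" "l1_lim M u L F" "integrable M g" "\<forall>\<^sub>F t in F. AE x in M. g x \<le> u t x"
  shows "AE x in M. g x \<le> L x"
  using l1_lim_AE_le[OF assms(1) l1_lim_const[OF assms(3)] assms(2,4)] .

lemma l1_lim_unique:
  assumes "F \<noteq> bot" "l1_lim M u L F" "l1_lim M u L' F"
  shows "AE x in M. L x = L' x"
  using l1_lim_AE_le[OF assms] l1_lim_AE_le[OF assms(1,3,2)] by (auto elim: AE_mp)

lemma l1_lim_linear:
  assumes u: "l1_lim M u L F" and v: "l1_lim M v L' F"
  shows "l1_lim M (\<lambda>t x. a * u t x + b * v t x) (\<lambda>x. a * L x + b * L' x) F"
proof (rule l1_limI)
  note L = l1_limD(1)[OF u] l1_limD(1)[OF v]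
  show "integrable M (\<lambda>x. a * L x + b * L' x)" using L by auto
  show "\<forall>\<^sub>F t in F. integrable M (\<lambda>x. a * u t x + b * v t x)"
    using l1_limD(2)[OF u] l1_limD(2)[OF v] by eventually_elim auto
  show "((\<lambda>t. l1norm M (\<lambda>x. a * u t x + b * v t x - (a * L x + b * L' x))) \<longlongrightarrow> 0) F"
  proof (rule tendsto_sandwich[OF _ _ tendsto_const])
    show "\<forall>\<^sub>F t in F. 0 \<le> l1norm M (\<lambda>x. a * u t x + b * v t x - (a * L x + b * L' x))"
      by (simp add: l1norm_nonneg)
    show "\<forall>\<^sub>F t in F. l1norm M (\<lambda>x. a * u t x + b * v t x - (a * L x + b * L' x))
       \<le> \<bar>a\<bar> * l1norm M (\<lambda>x. u t x - L x) + \<bar>b\<bar> * l1norm M (\<lambda>x. v t x - L' x)"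
      using l1_limD(2)[OF u] l1_limD(2)[OF v]
    proof eventually_elim
      case (elim t)
      have "l1norm M (\<lambda>x. a * u t x + b * v t x - (a * L x + b * L' x))
          = l1norm M (\<lambda>x. a * (u t x - L x) + b * (v t x - L' x))" by (simp add: algebra_simps)
      also have "\<dots> \<le> l1norm M (\<lambda>x. a * (u t x - L x)) + l1norm M (\<lambda>x. b * (v t x - L' x))"
        using elim L by (intro l1norm_add_le) auto
      finally show ?case by (simp add: l1norm_cmult)
    qed
    show "((\<lambda>t. \<bar>a\<bar> * l1norm M (\<lambda>x. u t x - L x) + \<bar>b\<bar> * l1norm M (\<lambda>x. v t x - L' x)) \<longlongrightarrow> 0) F"
      using tendsto_add[OF tendsto_mult_right_zero[OF l1_limD(3)[OF u]]
          tendsto_mult_right_zero[OF l1_limD(3)[OF v]]]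
      by simp
  qed
qed

lemma l1_lim_integral:
  assumes u: "l1_lim M u L F"
  shows "((\<lambda>t. integral\<^sup>L M (u t)) \<longlongrightarrow> integral\<^sup>L M L) F"
proof -
  have bound: "\<forall>\<^sub>F t in F. \<bar>integral\<^sup>L M (u t) - integral\<^sup>L M L\<bar> \<le> l1norm M (\<lambda>x. u t x - L x)"
    using l1_limD(2)[OF u]
  proof eventually_elim
    case (elim t)
    then have "integral\<^sup>L M (u t) - integral\<^sup>L M L = integral\<^sup>L M (\<lambda>x. u t x - L x)"
      using l1_limD(1)[OF u] by simp
    then show ?case using abs_integral_le_l1norm[of M "\<lambda>x. u t x - L x"] by simp
  qed
  have "((\<lambda>t. integral\<^sup>L M (u t) - integral\<^sup>L M L) \<longlongrightarrow> 0) F"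
    by (rule Lim_null_comparison[OF eventually_mono[OF bound] l1_limD(3)[OF u]]) simp
  then show ?thesis by (rule LIM_zero_cancel)
qed

lemma l1_lim_l1norm_tendsto:
  assumes u: "l1_lim M u L F"
  shows "((\<lambda>t. l1norm M (u t)) \<longlongrightarrow> l1norm M L) F"
proof -
  have "l1_lim M (\<lambda>t x. \<bar>u t x\<bar>) (\<lambda>x. \<bar>L x\<bar>) F"
  proof (rule l1_limI)
    show "integrable M (\<lambda>x. \<bar>L x\<bar>)" using l1_limD(1)[OF u] by simp
    show "\<forall>\<^sub>F t in F. integrable M (\<lambda>x. \<bar>u t x\<bar>)" using l1_limD(2)[OF u] by eventually_elim simp
    have "\<forall>\<^sub>F t in F. norm (l1norm M (\<lambda>x. \<bar>u t x\<bar> - \<bar>L x\<bar>)) \<le> l1norm M (\<lambda>x. u t x - L x)"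
      using l1_limD(2)[OF u] l1_limD(1)[OF u]
      by (auto elim!: eventually_mono intro!: l1norm_mono simp: abs_triangle_ineq3 l1norm_nonneg)
    then show "((\<lambda>t. l1norm M (\<lambda>x. \<bar>u t x\<bar> - \<bar>L x\<bar>)) \<longlongrightarrow> 0) F"
      by (rule Lim_null_comparison[OF _ l1_limD(3)[OF u]])
  qed
  from l1_lim_integral[OF this] show ?thesis unfolding l1norm_def .
qed

lemma l1_lim_l1norm_le:
  assumes "F \<noteq> bot" "l1_lim M u L F" "\<forall>\<^sub>F t in F. l1norm M (u t) \<le> c"
  shows "l1norm M L \<le> c"
  using tendsto_le[OF assms(1) tendsto_const l1_lim_l1norm_tendsto[OF assms(2)] assms(3)] .

lemma l1_lim_AE_subseq:
  assumes u: "l1_lim M u L sequentially" and int: "\<And>n. integrable M (u n)"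
  obtains r where "strict_mono r" "AE x in M. (\<lambda>n. u (r n) x) \<longlonglongrightarrow> L x"
proof -
  have L: "integrable M L" using l1_limD(1)[OF u] .
  have "\<exists>r::nat\<Rightarrow>nat. strict_mono r \<and> (AE x in M. (\<lambda>n. u (r n) x - L x) \<longlonglongrightarrow> 0)"
  proof (rule tendsto_L1_AE_subseq)
    show "integrable M (\<lambda>x. u n x - L x)" for n using int L by auto
    show "(\<lambda>n. LINT x|M. norm (u n x - L x)) \<longlonglongrightarrow> 0"
      using l1_limD(3)[OF u] unfolding l1norm_def by simp
  qed
  then obtain r where "strict_mono r" "AE x in M. (\<lambda>n. u (r n) x - L x) \<longlonglongrightarrow> 0" by blast
  then show ?thesis by (intro that) (auto elim!: eventually_mono simp: LIM_zero_iff)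
qed

text \<open>Fatou's lemma for the \<open>L\<^sup>1\<close> distance to an a.e. limit.\<close>

lemma l1norm_diff_AE_limit_le:
  assumes int: "\<And>n. integrable M (u n)" and L: "L \<in> borel_measurable M"
    and conv: "AE x in M. (\<lambda>i. u i x) \<longlonglongrightarrow> L x"
    and close: "\<forall>\<^sub>F i in sequentially. l1norm M (\<lambda>x. f x - u i x) \<le> e" and f: "integrable M f"
  shows "integrable M (\<lambda>x. f x - L x) \<and> l1norm M (\<lambda>x. f x - L x) \<le> e"
proof -
  have [measurable]: "u n \<in> borel_measurable M" for n using int by auto
  have "(\<integral>\<^sup>+x. ennreal \<bar>f x - L x\<bar> \<partial>M) = (\<integral>\<^sup>+x. liminf (\<lambda>i. ennreal \<bar>f x - u i x\<bar>) \<partial>M)"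
  proof (rule nn_integral_cong_AE)
    show "AE x in M. ennreal \<bar>f x - L x\<bar> = liminf (\<lambda>i. ennreal \<bar>f x - u i x\<bar>)"
      using conv
    proof eventually_elim
      case (elim x)
      have "(\<lambda>i. ennreal \<bar>f x - u i x\<bar>) \<longlonglongrightarrow> ennreal \<bar>f x - L x\<bar>"
        by (intro tendsto_ennrealI tendsto_rabs tendsto_diff tendsto_const elim)
      then show ?case by (metis lim_imp_Liminf trivial_limit_sequentially)
    qed
  qed
  also have "\<dots> \<le> liminf (\<lambda>i. \<integral>\<^sup>+x. ennreal \<bar>f x - u i x\<bar> \<partial>M)"
    using f by (intro nn_integral_liminf) auto
  also have "\<dots> \<le> ennreal e"
    using close
    by (intro Liminf_le)
      (auto elim!: eventually_mono intro: ennreal_leI simp: nn_integral_abs_eq_l1norm f int)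
  finally have le: "(\<integral>\<^sup>+x. ennreal \<bar>f x - L x\<bar> \<partial>M) \<le> ennreal e" .
  have I: "integrable M (\<lambda>x. f x - L x)"
    unfolding integrable_iff_bounded using f L le le_less_trans[OF le ennreal_less_top[of e]] by auto
  have "l1norm M (\<lambda>x. f x - L x) \<le> e"
  proof (cases "e \<ge> 0")
    case True
    then show ?thesis using le nn_integral_abs_eq_l1norm[OF I] by (simp add: ennreal_le_iff)
  next
    case False
    then obtain i where "l1norm M (\<lambda>x. f x - u i x) \<le> e"
      using eventually_happens'[OF _ close] by auto
    then show ?thesis using False l1norm_nonneg[of M] by (meson order_trans)
  qed
  with I show ?thesis by simp
qed

lemma l1_complete:
  assumes int: "\<And>n. integrable M (u n)"
    and Cauchy: "\<And>e. e > 0 \<Longrightarrow> \<exists>N. \<forall>i\<ge>N. \<forall>j\<ge>N. l1norm M (\<lambda>x. u i x - u j x) < e"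
  obtains L where "l1_lim M u L sequentially"
proof -
  have [measurable]: "\<And>n. u n \<in> borel_measurable M" using int by auto
  obtain r where r: "strict_mono r" "AE x in M. Cauchy (\<lambda>i. u (r i) x)"
  proof (rule cauchy_L1_AE_cauchy_subseq[where s=u and M=M])
    show "\<exists>N. \<forall>i\<ge>N. \<forall>j\<ge>N. LINT x|M. norm (u i x - u j x) < e" if "e > 0" for e
      using Cauchy[OF that] unfolding l1norm_def by simp
  qed (use int in auto)
  define L where "L x = lim (\<lambda>i. u (r i) x)" for x
  have [measurable]: "L \<in> borel_measurable M" unfolding L_def by measurable
  have conv: "AE x in M. (\<lambda>i. u (r i) x) \<longlonglongrightarrow> L x"
    using r(2) by eventually_elim (simp add: L_def Cauchy_convergent_iff convergent_LIMSEQ_iff)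
  have close: "integrable M (\<lambda>x. u n x - L x) \<and> l1norm M (\<lambda>x. u n x - L x) \<le> e"
    if N: "\<forall>i\<ge>N. \<forall>j\<ge>N. l1norm M (\<lambda>x. u i x - u j x) < e" and n: "n \<ge> N" for e N n
  proof (rule l1norm_diff_AE_limit_le[OF int _ conv _ int])
    show "\<forall>\<^sub>F i in sequentially. l1norm M (\<lambda>x. u n x - u (r i) x) \<le> e"
      using eventually_ge_at_top[of N]
      by eventually_elim (use N n seq_suble[OF r(1)] in \<open>meson le_trans less_imp_le\<close>)
  qed simp
  obtain N1 where "\<forall>i\<ge>N1. \<forall>j\<ge>N1. l1norm M (\<lambda>x. u i x - u j x) < 1" using Cauchy[of 1] by auto
  then have "integrable M (\<lambda>x. u N1 x - L x)" using close[of N1 1 N1] by simp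
  from Bochner_Integration.integrable_diff[OF int[of N1] this] have LI: "integrable M L" by simp
  have "(\<lambda>n. l1norm M (\<lambda>x. u n x - L x)) \<longlonglongrightarrow> 0"
  proof (rule LIMSEQ_I)
    fix e :: real assume e: "e > 0"
    obtain N where N: "\<forall>i\<ge>N. \<forall>j\<ge>N. l1norm M (\<lambda>x. u i x - u j x) < e/2"
      using Cauchy[of "e/2"] e by auto
    have "norm (l1norm M (\<lambda>x. u n x - L x) - 0) < e" if "n \<ge> N" for n
    proof -
      have "l1norm M (\<lambda>x. u n x - L x) \<le> e/2" using close[OF N that] by simp
      then show ?thesis using e l1norm_nonneg[of M "\<lambda>x. u n x - L x"] by simp
    qed
    then show "\<exists>no. \<forall>n\<ge>no. norm (l1norm M (\<lambda>x. u n x - L x) - 0) < e" by blast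
  qed
  with LI int show ?thesis by (intro that l1_limI) auto
qed

lemma l1norm_sum_le:
  assumes "finite A" "\<And>k. k \<in> A \<Longrightarrow> integrable M (h k)"
  shows "l1norm M (\<lambda>x. \<Sum>k\<in>A. h k x) \<le> (\<Sum>k\<in>A. l1norm M (h k))"
  using assms
proof (induction A rule: finite_induct)
  case empty
  then show ?case by (simp add: l1norm_def)
next
  case (insert a A)
  then have "l1norm M (\<lambda>x. h a x + (\<Sum>k\<in>A. h k x)) \<le> l1norm M (h a) + l1norm M (\<lambda>x. \<Sum>k\<in>A. h k x)"
    by (intro l1norm_add_le) auto
  with insert show ?case by simp
qed

section \<open>Substochastic operators and semigroups\<close>

context
  fixes M :: "'a measure" and T :: "('a \<Rightarrow> real) \<Rightarrow> ('a \<Rightarrow> real)"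
  assumes T: "substochastic_op M T"
begin

lemma op_integrable: "integrable M f \<Longrightarrow> integrable M (T f)"
  using T unfolding substochastic_op_def by simp

lemma op_AE_cong: "integrable M f \<Longrightarrow> AE x in M. f x = g x \<Longrightarrow> AE x in M. T f x = T g x"
  using T unfolding substochastic_op_def by simp

lemma op_linear: "integrable M f \<Longrightarrow> integrable M g \<Longrightarrow>
   AE x in M. T (\<lambda>y. a * f y + b * g y) x = a * T f x + b * T g x"
  using T unfolding substochastic_op_def by simp

lemma op_nonneg: "integrable M f \<Longrightarrow> AE x in M. 0 \<le> f x \<Longrightarrow> AE x in M. 0 \<le> T f x"
  using T unfolding substochastic_op_def by simp

lemma op_l1norm_le: "integrable M f \<Longrightarrow> l1norm M (T f) \<le> l1norm M f"
  using T unfolding substochastic_op_def by simp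

lemma op_diff:
  assumes "integrable M f" "integrable M g"
  shows "AE x in M. T (\<lambda>y. f y - g y) x = T f x - T g x"
  using op_linear[OF assms, of 1 "-1"] by simp

lemma op_cmult:
  assumes "integrable M f"
  shows "AE x in M. T (\<lambda>y. a * f y) x = a * T f x"
  using op_linear[OF assms assms, of a 0] by simp

lemma op_mono:
  assumes "integrable M f" "integrable M g" "AE x in M. f x \<le> g x"
  shows "AE x in M. T f x \<le> T g x"
proof -
  have "AE x in M. 0 \<le> T (\<lambda>y. g y - f y) x"
    using assms(1,2) by (intro op_nonneg) (use assms(3) in \<open>auto elim!: eventually_mono\<close>)
  with op_diff[OF assms(2,1)] show ?thesis by eventually_elim auto
qed

lemma op_dist_le:
  assumes "integrable M f" "integrable M g"
  shows "l1norm M (\<lambda>x. T f x - T g x) \<le> l1norm M (\<lambda>x. f x - g x)"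
proof -
  have "l1norm M (\<lambda>x. T f x - T g x) = l1norm M (T (\<lambda>y. f y - g y))"
  proof (rule l1norm_cong_AE)
    show "(\<lambda>x. T f x - T g x) \<in> borel_measurable M"
      using op_integrable[OF assms(1)] op_integrable[OF assms(2)] by auto
    show "T (\<lambda>y. f y - g y) \<in> borel_measurable M" using op_integrable[of "\<lambda>y. f y - g y"] assms by auto
    show "AE x in M. T f x - T g x = T (\<lambda>y. f y - g y) x" using op_diff[OF assms] by eventually_elim simp
  qed
  also have "\<dots> \<le> l1norm M (\<lambda>x. f x - g x)"
    using assms by (intro op_l1norm_le) auto
  finally show ?thesis .
qed

lemma op_l1_lim:
  assumes "l1_lim M u L F"
  shows "l1_lim M (\<lambda>t. T (u t)) (T L) F"
proof (rule l1_limI)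
  note L = l1_limD(1)[OF assms] and ev = l1_limD(2)[OF assms]
  show "integrable M (T L)" by (rule op_integrable[OF L])
  show "\<forall>\<^sub>F t in F. integrable M (T (u t))" using ev by eventually_elim (rule op_integrable)
  have "\<forall>\<^sub>F t in F. norm (l1norm M (\<lambda>x. T (u t) x - T L x)) \<le> l1norm M (\<lambda>x. u t x - L x)"
    using ev by eventually_elim (simp add: l1norm_nonneg op_dist_le[OF _ L])
  then show "((\<lambda>t. l1norm M (\<lambda>x. T (u t) x - T L x)) \<longlongrightarrow> 0) F"
    by (rule Lim_null_comparison[OF _ l1_limD(3)[OF assms]])
qed

lemma op_sum:
  assumes "finite A" "\<And>k. k \<in> A \<Longrightarrow> integrable M (h k)"
  shows "AE x in M. T (\<lambda>y. \<Sum>k\<in>A. c k * h k y) x = (\<Sum>k\<in>A. c k * T (h k) x)"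
  using assms
proof (induction A rule: finite_induct)
  case empty
  then show ?case using op_linear[of "\<lambda>_. 0" "\<lambda>_. 0" 0 0] by simp
next
  case (insert a A)
  have "AE x in M. T (\<lambda>y. c a * h a y + 1 * (\<Sum>k\<in>A. c k * h k y)) x
      = c a * T (h a) x + 1 * T (\<lambda>y. \<Sum>k\<in>A. c k * h k y) x"
    using insert by (intro op_linear) auto
  moreover have "AE x in M. T (\<lambda>y. \<Sum>k\<in>A. c k * h k y) x = (\<Sum>k\<in>A. c k * T (h k) x)"
    using insert by auto
  ultimately have "AE x in M. T (\<lambda>y. c a * h a y + (\<Sum>k\<in>A. c k * h k y)) x
      = c a * T (h a) x + (\<Sum>k\<in>A. c k * T (h k) x)"
    by eventually_elim simp
  then show ?case using insert(1,2) by simp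
qed

end

context
  fixes M :: "'a measure" and T :: "real \<Rightarrow> ('a \<Rightarrow> real) \<Rightarrow> ('a \<Rightarrow> real)"
  assumes T: "substochastic_sg M T"
begin

lemma sg_op: "0 \<le> t \<Longrightarrow> substochastic_op M (T t)"
  using T unfolding substochastic_sg_def by simp

lemma sg_0: "integrable M f \<Longrightarrow> AE x in M. T 0 f x = f x"
  using T unfolding substochastic_sg_def by simp

lemma sg_add: "0 \<le> t \<Longrightarrow> 0 \<le> s \<Longrightarrow> integrable M f \<Longrightarrow> AE x in M. T (t + s) f x = T t (T s f) x"
  using T unfolding substochastic_sg_def by simp

lemma sg_strongly_continuous:
  "integrable M f \<Longrightarrow> ((\<lambda>t. l1norm M (\<lambda>x. T t f x - f x)) \<longlongrightarrow> 0) (at_right 0)"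
  using T unfolding substochastic_sg_def by simp

lemma sg_integrable: "0 \<le> t \<Longrightarrow> integrable M f \<Longrightarrow> integrable M (T t f)"
  using op_integrable[OF sg_op] by blast

lemma sg_l1norm_le: "0 \<le> t \<Longrightarrow> integrable M f \<Longrightarrow> l1norm M (T t f) \<le> l1norm M f"
  using op_l1norm_le[OF sg_op] by blast

lemma sg_shift_dist_le:
  assumes d: "0 \<le> d" and r: "0 \<le> r" and f: "integrable M f"
  shows "l1norm M (\<lambda>x. T (d + r) f x - T d f x) \<le> l1norm M (\<lambda>x. T r f x - f x)"
proof -
  have "l1norm M (\<lambda>x. T (d + r) f x - T d f x) = l1norm M (\<lambda>x. T d (T r f) x - T d f x)"
    using sg_add[OF d r f] sg_integrable[OF _ f] sg_integrable[OF d sg_integrable[OF r f]] d r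
    by (intro l1norm_cong_AE) (auto elim!: eventually_mono)
  also have "\<dots> \<le> l1norm M (\<lambda>x. T r f x - f x)"
    by (rule op_dist_le[OF sg_op[OF d] sg_integrable[OF r f] f])
  finally show ?thesis .
qed

lemma sg_close_to_identity:
  assumes f: "integrable M f" and e: "e > 0"
  obtains \<eta> where "\<eta> > 0" "\<And>r. 0 \<le> r \<Longrightarrow> r < \<eta> \<Longrightarrow> l1norm M (\<lambda>x. T r f x - f x) < e"
proof -
  obtain \<eta> where \<eta>: "\<eta> > 0" "\<And>r. 0 < r \<Longrightarrow> r < \<eta> \<Longrightarrow> l1norm M (\<lambda>x. T r f x - f x) < e"
    using order_tendstoD(2)[OF sg_strongly_continuous[OF f] e]
    unfolding eventually_at_right_field by auto
  have "l1norm M (\<lambda>x. T 0 f x - f x) = l1norm M (\<lambda>x. 0)"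
    using sg_0[OF f] sg_integrable[OF _ f, of 0] f
    by (intro l1norm_cong_AE) (auto elim!: eventually_mono)
  then have "l1norm M (\<lambda>x. T 0 f x - f x) < e" using e by (simp add: l1norm_def)
  with \<eta> show ?thesis by (intro that) (auto simp: le_less)
qed

end

section \<open>Resolvents as Laplace transforms\<close>

definition mesh :: "nat \<Rightarrow> real" where "mesh n = (1/2) ^ n"

lemma mesh_pos: "0 < mesh n" and mesh_le_1: "mesh n \<le> 1"
  unfolding mesh_def by (auto simp: power_le_one)

lemma grid_nonneg: "0 \<le> real k * mesh n"
  by (simp add: mesh_def)

lemma mesh_mult_pow2: "n \<le> m \<Longrightarrow> mesh m * 2 ^ (m - n) = mesh n"
  unfolding mesh_def by (simp add: power_diff field_simps power_one_over)

lemma grid_mesh_eq: "real (n * 2 ^ m) * mesh m = real n"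
  unfolding mesh_def by (simp add: power_one_over)

lemma mesh_eventually_less: "e > 0 \<Longrightarrow> \<forall>\<^sub>F n in sequentially. mesh n < e"
  unfolding mesh_def by (intro order_tendstoD(2)[OF LIMSEQ_power_zero]) auto

lemma dyadic_approx_below:
  assumes "0 < b" "b \<le> h"
  obtains j p where "real j * mesh p \<le> h" "h - real j * mesh p < b"
proof -
  obtain p where p: "mesh p < b" using eventually_happens'[OF _ mesh_eventually_less[OF assms(1)]] by auto
  define j where "j = nat \<lfloor>h / mesh p\<rfloor>"
  have "real j = of_int \<lfloor>h / mesh p\<rfloor>" unfolding j_def using assms mesh_pos[of p] by simp
  then have "real j \<le> h / mesh p" "h / mesh p < real j + 1" by linarith+
  then have "real j * mesh p \<le> h" "h < real j * mesh p + mesh p"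
    using mesh_pos[of p] by (simp_all add: field_simps)
  with p show ?thesis by (intro that) auto
qed

lemma sum_power_tail_le:
  fixes q :: real
  assumes "0 \<le> q" "q < 1" "N \<le> N'"
  shows "(\<Sum>k\<in>{N..<N'}. q ^ k) \<le> q ^ N / (1 - q)"
proof -
  have "(\<Sum>k\<in>{N..<N'}. q ^ k) = (\<Sum>k<N'-N. q ^ (N + k))"
    using assms(3) by (intro sum.reindex_bij_witness[of _ "\<lambda>k. k + N" "\<lambda>k. k - N"]) auto
  also have "\<dots> = q ^ N * ((1 - q ^ (N'-N)) / (1 - q))"
    using assms by (simp add: power_add sum_distrib_left[symmetric] sum_gp_strict)
  also have "\<dots> \<le> q ^ N * (1 / (1 - q))"
    using assms by (intro mult_left_mono divide_right_mono) auto
  finally show ?thesis by simp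
qed

text \<open>The Riemann sums of \<open>\<integral>\<^sub>0\<^sup>\<infinity> e\<^sup>-\<^sup>l\<^sup>s ds\<close> with step \<open>mesh n \<le> 1\<close> are bounded by \<open>1/l + 1\<close>.\<close>

lemma mesh_geom_le:
  assumes l: "l > 0"
  shows "mesh n / (1 - exp (- l * mesh n)) \<le> 1 / l + 1"
proof -
  define x where "x = l * mesh n"
  have x: "x > 0" unfolding x_def using l mesh_pos by simp
  have "exp (-x) \<le> 1 / (1 + x)"
    using exp_ge_add_one_self[of x] x by (simp add: exp_minus field_simps)
  then have "x / (1 + x) \<le> 1 - exp (-x)" using x by (simp add: field_simps)
  then have "mesh n / (1 - exp (-x)) \<le> mesh n / (x / (1 + x))"
    using x mesh_pos[of n] by (intro divide_left_mono) auto
  also have "\<dots> = 1 / l + mesh n" unfolding x_def using l mesh_pos[of n] by (simp add: field_simps)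
  finally show ?thesis unfolding x_def using mesh_le_1[of n] by simp
qed

lemma exp_neg_mult_tendsto_0:
  assumes "l > (0::real)"
  shows "(\<lambda>n. exp (- l * real n)) \<longlonglongrightarrow> 0"
proof -
  have "(\<lambda>n. exp (- l) ^ n) \<longlonglongrightarrow> 0" using assms by (intro LIMSEQ_power_zero) simp
  then show ?thesis by (simp add: exp_of_nat_mult[symmetric] mult.commute)
qed

lemma exp_diff_quotient_tendsto: "((\<lambda>d. (exp (l * d) - 1) / d :: real) \<longlongrightarrow> l) (at_right 0)"
proof -
  have "((\<lambda>d. exp (l * d)) has_real_derivative exp (l * 0) * l) (at 0)"
    by (auto intro!: derivative_eq_intros)
  then have "((\<lambda>d. (exp (l * d) - 1) / d) \<longlongrightarrow> l) (at 0)"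
    unfolding has_field_derivative_iff by simp
  then show ?thesis by (rule tendsto_mono[OF at_le[OF subset_UNIV]])
qed

lemma exp_small_steps:
  fixes l :: real
  assumes \<epsilon>: "\<epsilon> > 0" and A: "A \<ge> 0" and B: "B \<ge> 0"
  shows "\<exists>\<eta>3>0. \<forall>d. 0 < d \<and> d < \<eta>3 \<longrightarrow> exp (l * d) \<le> 2 \<and> \<bar>(exp (l * d) - 1) / d - l\<bar> * A \<le> \<epsilon>
     \<and> (exp (l * d) - 1) * B \<le> \<epsilon>"
proof -
  have c1: "((\<lambda>d. exp (l * d)) \<longlongrightarrow> 1) (at_right 0)"
  proof -
    have "((\<lambda>d. exp (l * d)) \<longlongrightarrow> exp (l * 0)) (at_right 0)"
      by (intro tendsto_intros)
    then show ?thesis by simp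
  qed
  have e1: "\<forall>\<^sub>F d in at_right 0. exp (l * d) < 2" using order_tendstoD(2)[OF c1] by simp
  have c2: "((\<lambda>d. \<bar>(exp (l * d) - 1) / d - l\<bar> * A) \<longlongrightarrow> \<bar>l - l\<bar> * A) (at_right 0)"
    by (intro tendsto_intros exp_diff_quotient_tendsto)
  have e2: "\<forall>\<^sub>F d in at_right 0. \<bar>(exp (l * d) - 1) / d - l\<bar> * A < \<epsilon>"
    using order_tendstoD(2)[OF c2] \<epsilon> by simp
  have c3: "((\<lambda>d. (exp (l * d) - 1) * B) \<longlongrightarrow> (1 - 1) * B) (at_right 0)"
    by (intro tendsto_intros c1)
  have e3: "\<forall>\<^sub>F d in at_right 0. (exp (l * d) - 1) * B < \<epsilon>"
    using order_tendstoD(2)[OF c3] \<epsilon> by simp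
  have "\<forall>\<^sub>F d in at_right 0. exp (l * d) \<le> 2 \<and> \<bar>(exp (l * d) - 1) / d - l\<bar> * A \<le> \<epsilon> \<and> (exp (l * d) - 1) * B \<le> \<epsilon>"
    using e1 e2 e3 by eventually_elim auto
  then show ?thesis unfolding eventually_at_right_field by auto
qed

context
  fixes M :: "'a measure" and T :: "real \<Rightarrow> ('a \<Rightarrow> real) \<Rightarrow> ('a \<Rightarrow> real)"
    and l :: real and g :: "'a \<Rightarrow> real"
  assumes T: "substochastic_sg M T" and l: "l > 0" and g: "integrable M g"
begin

lemma one_div_l_plus_1_pos: "0 < 1 / l + 1"
  using l by (auto intro!: add_pos_pos)

lemma tail_bound_eventually_less:
  "e > 0 \<Longrightarrow> \<forall>\<^sub>F n in sequentially. exp (- l * real n) * ((1 / l + 1) * l1norm M g) < e"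
  using order_tendstoD(2)[OF tendsto_mult_left_zero[OF exp_neg_mult_tendsto_0[OF l]]] by blast

definition laplace_sum :: "nat \<Rightarrow> nat \<Rightarrow> 'a \<Rightarrow> real" where
  "laplace_sum n N = (\<lambda>x. \<Sum>k<N. mesh n * exp (- l * (real k * mesh n)) * T (real k * mesh n) g x)"

lemma orbit_integrable: "0 \<le> s \<Longrightarrow> integrable M (T s g)"
  using sg_integrable[OF T _ g] by blast

lemma laplace_sum_integrable: "integrable M (laplace_sum n N)"
  unfolding laplace_sum_def
  by (intro Bochner_Integration.integrable_sum integrable_mult_right orbit_integrable)
     (simp add: mesh_def)

lemma damped_grid_sum_le:
  assumes v: "integrable M v" and "N \<le> N'"
  shows "mesh n * l1norm M (\<lambda>x. \<Sum>k\<in>{N..<N'}. exp (- l * (real k * mesh n)) * T (real k * mesh n) v x)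
    \<le> exp (- l * (real N * mesh n)) * (1 / l + 1) * l1norm M v"
proof -
  define q where "q = exp (- l * mesh n)"
  have q: "0 \<le> q" "q < 1" unfolding q_def using l mesh_pos[of n] by auto
  have pow: "exp (- l * (real k * mesh n)) = q ^ k" for k
    unfolding q_def exp_of_nat_mult[symmetric] by (simp add: algebra_simps)
  have "l1norm M (\<lambda>x. \<Sum>k\<in>{N..<N'}. exp (- l * (real k * mesh n)) * T (real k * mesh n) v x)
      \<le> (\<Sum>k\<in>{N..<N'}. l1norm M (\<lambda>x. exp (- l * (real k * mesh n)) * T (real k * mesh n) v x))"
    using sg_integrable[OF T grid_nonneg v] by (intro l1norm_sum_le) auto
  also have "\<dots> \<le> (\<Sum>k\<in>{N..<N'}. q ^ k * l1norm M v)"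
  proof (rule sum_mono)
    fix k
    show "l1norm M (\<lambda>x. exp (- l * (real k * mesh n)) * T (real k * mesh n) v x) \<le> q ^ k * l1norm M v"
      unfolding l1norm_cmult pow using sg_l1norm_le[OF T grid_nonneg v] q(1)
      by (simp add: mult_left_mono)
  qed
  also have "\<dots> = l1norm M v * (\<Sum>k\<in>{N..<N'}. q ^ k)"
    by (simp add: sum_distrib_left mult.commute)
  also have "\<dots> \<le> l1norm M v * (q ^ N / (1 - q))"
    using sum_power_tail_le[OF q assms(2)] by (intro mult_left_mono) (auto simp: l1norm_nonneg)
  finally have sum_le: "l1norm M (\<lambda>x. \<Sum>k\<in>{N..<N'}. exp (- l * (real k * mesh n)) * T (real k * mesh n) v x)
      \<le> l1norm M v * (q ^ N / (1 - q))" .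
  have "mesh n * l1norm M (\<lambda>x. \<Sum>k\<in>{N..<N'}. exp (- l * (real k * mesh n)) * T (real k * mesh n) v x)
      \<le> mesh n * (l1norm M v * (q ^ N / (1 - q)))"
    using sum_le mesh_pos[of n] by (intro mult_left_mono) auto
  also have "\<dots> = q ^ N * (mesh n / (1 - q)) * l1norm M v" by simp
  also have "\<dots> \<le> q ^ N * (1 / l + 1) * l1norm M v"
    using mesh_geom_le[OF l, of n] q l1norm_nonneg[of M v]
    unfolding q_def by (intro mult_right_mono mult_left_mono) auto
  finally show ?thesis by (simp only: pow)
qed

lemma laplace_sum_tail:
  assumes "N \<le> N'"
  shows "l1norm M (\<lambda>x. laplace_sum n N' x - laplace_sum n N x)
    \<le> exp (- l * (real N * mesh n)) * (1 / l + 1) * l1norm M g"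
proof -
  have "(\<lambda>x. laplace_sum n N' x - laplace_sum n N x)
      = (\<lambda>x. mesh n * (\<Sum>k\<in>{N..<N'}. exp (- l * (real k * mesh n)) * T (real k * mesh n) g x))"
    unfolding laplace_sum_def lessThan_atLeast0 using sum_diff_nat_ivl[of 0 N N'] assms
    by (intro ext) (simp add: sum_distrib_left mult.assoc)
  then show ?thesis
    using damped_grid_sum_le[OF g assms] mesh_pos[of n] by (simp add: l1norm_cmult)
qed

lemma laplace_sum_shift:
  "AE x in M. T (real D * mesh n) (laplace_sum n N) x
    = exp (l * (real D * mesh n)) * (laplace_sum n (N + D) x - laplace_sum n D x)"
proof -
  define s where "s k = real k * mesh n" for k
  define c where "c k = mesh n * exp (- l * s k)" for k
  have sum_form: "laplace_sum n N = (\<lambda>y. \<Sum>k\<in>{..<N}. c k * T (s k) g y)" for N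
    unfolding laplace_sum_def c_def s_def by (simp add: mult.assoc)
  have s0: "0 \<le> s k" for k unfolding s_def by (rule grid_nonneg)
  have linear: "AE x in M. T (s D) (laplace_sum n N) x = (\<Sum>k\<in>{..<N}. c k * T (s D) (T (s k) g) x)"
    unfolding sum_form by (rule op_sum[OF sg_op[OF T s0]]) (auto intro: orbit_integrable s0)
  have semigroup: "AE x in M. \<forall>k\<in>{..<N}. T (s D + s k) g x = T (s D) (T (s k) g) x"
    by (rule eventually_ball_finite) (auto intro!: sg_add[OF T s0 s0 g])
  have sadd: "s D + s k = s (k + D)" for k unfolding s_def by (simp add: algebra_simps)
  have cexp: "c k = exp (l * s D) * (mesh n * exp (- l * s (k + D)))" for k
    unfolding c_def sadd[symmetric] by (simp add: exp_add[symmetric] algebra_simps)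
  have "(\<Sum>k\<in>{..<N}. c k * T (s (k + D)) g x)
      = exp (l * s D) * (\<Sum>k\<in>{..<N}. mesh n * exp (- l * s (k + D)) * T (s (k + D)) g x)" for x
    unfolding cexp by (simp add: sum_distrib_left algebra_simps)
  also have "(\<Sum>k\<in>{..<N}. mesh n * exp (- l * s (k + D)) * T (s (k + D)) g x)
      = (\<Sum>i\<in>{D..<N + D}. mesh n * exp (- l * s i) * T (s i) g x)" for x
    using sum.shift_bounds_nat_ivl[of "\<lambda>i. mesh n * exp (- l * s i) * T (s i) g x" 0 D N]
    by (simp add: lessThan_atLeast0)
  also have "(\<Sum>i\<in>{D..<N + D}. mesh n * exp (- l * s i) * T (s i) g x)
      = laplace_sum n (N + D) x - laplace_sum n D x" for x
    unfolding laplace_sum_def s_def lessThan_atLeast0 by (rule sum_diff_nat_ivl[symmetric]) simp_all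
  finally have reindexed: "(\<Sum>k\<in>{..<N}. c k * T (s (k + D)) g x)
      = exp (l * s D) * (laplace_sum n (N + D) x - laplace_sum n D x)" for x .
  from linear semigroup show ?thesis
  proof eventually_elim
    case (elim x)
    then have "T (s D) (laplace_sum n N) x = (\<Sum>k\<in>{..<N}. c k * T (s (k + D)) g x)"
      by (simp add: sadd)
    then show ?case using reindexed unfolding s_def by simp
  qed
qed

lemma laplace_sum_regroup:
  assumes nm: "n \<le> m"
  shows "AE x in M. laplace_sum m (K * 2 ^ (m - n)) x
      = (\<Sum>k<K. exp (- l * (real k * mesh n)) * T (real k * mesh n) (laplace_sum m (2 ^ (m - n))) x)"
proof -
  define B :: nat where "B = 2 ^ (m - n)"
  define t where "t k = real k * mesh n" for k
  define u where "u j = real j * mesh m" for j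
  define c where "c j = mesh m * exp (- l * u j)" for j
  have t0: "0 \<le> t k" for k unfolding t_def by (rule grid_nonneg)
  have u0: "0 \<le> u j" for j unfolding u_def by (rule grid_nonneg)
  have tu: "real (k * B + j) * mesh m = t k + u j" for k j
    unfolding t_def u_def B_def using mesh_mult_pow2[OF nm]
    by (simp add: algebra_simps flip: mesh_mult_pow2[OF nm])
  have sum_form: "laplace_sum m B = (\<lambda>y. \<Sum>j\<in>{..<B}. c j * T (u j) g y)"
    unfolding laplace_sum_def c_def u_def by (simp add: mult.assoc)
  have linear: "AE x in M. \<forall>k\<in>{..<K}. T (t k) (laplace_sum m B) x = (\<Sum>j\<in>{..<B}. c j * T (t k) (T (u j) g) x)"
    by (rule eventually_ball_finite) (auto simp: sum_form intro!: op_sum[OF sg_op[OF T t0]] orbit_integrable u0)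
  have semigroup: "AE x in M. \<forall>k\<in>{..<K}. \<forall>j\<in>{..<B}. T (t k + u j) g x = T (t k) (T (u j) g) x"
    by (intro eventually_ball_finite ballI) (auto intro!: sg_add[OF T t0 u0 g])
  have grouped: "laplace_sum m (K * B) x = (\<Sum>k<K. \<Sum>j<B. exp (- l * t k) * (c j * T (t k + u j) g x))" for x
  proof -
    have "laplace_sum m (K * B) x = (\<Sum>k<K. \<Sum>i\<in>{k * B..<k * B + B}.
        mesh m * exp (- l * (real i * mesh m)) * T (real i * mesh m) g x)"
      unfolding laplace_sum_def by (rule sum.nat_group[symmetric])
    also have "\<dots> = (\<Sum>k<K. \<Sum>j<B.
        mesh m * exp (- l * (real (j + k * B) * mesh m)) * T (real (j + k * B) * mesh m) g x)"
    proof -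
      have sh: "sum f {k * B..<k * B + B} = (\<Sum>j<B. f (j + k * B))" for f :: "nat \<Rightarrow> real" and k
        using sum.shift_bounds_nat_ivl[of f 0 "k * B" B] by (simp add: lessThan_atLeast0 add.commute)
      show ?thesis by (rule sum.cong[OF refl]) (rule sh)
    qed
    also have "\<dots> = (\<Sum>k<K. \<Sum>j<B. exp (- l * t k) * (c j * T (t k + u j) g x))"
    proof (intro sum.cong refl)
      fix k j
      have e: "real (j + k * B) * mesh m = t k + u j" using tu[of k j] by (simp add: add.commute)
      show "mesh m * exp (- l * (real (j + k * B) * mesh m)) * T (real (j + k * B) * mesh m) g x
          = exp (- l * t k) * (c j * T (t k + u j) g x)"
        unfolding e c_def by (simp add: algebra_simps exp_add[symmetric])
    qed
    finally show ?thesis .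
  qed
  from linear semigroup show ?thesis
  proof eventually_elim
    case (elim x)
    have "laplace_sum m (K * B) x = (\<Sum>k<K. exp (- l * t k) * T (t k) (laplace_sum m B) x)"
      unfolding grouped using elim by (simp add: sum_distrib_left algebra_simps)
    then show ?case unfolding B_def t_def .
  qed
qed

lemma damped_orbit_close:
  assumes e: "e > 0"
  shows "\<exists>\<eta>>0. \<forall>s. 0 \<le> s \<and> s < \<eta> \<longrightarrow> l1norm M (\<lambda>x. exp (- l * s) * T s g x - g x) < e"
proof -
  obtain \<eta>1 where \<eta>1: "\<eta>1 > 0" "\<And>r. 0 \<le> r \<Longrightarrow> r < \<eta>1 \<Longrightarrow> l1norm M (\<lambda>x. T r g x - g x) < e/2"
    using sg_close_to_identity[OF T g half_gt_zero[OF e]] by blast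
  define \<eta>2 where "\<eta>2 = e / (2 * (l * l1norm M g + 1))"
  have lg: "0 \<le> l * l1norm M g" using l l1norm_nonneg[of M g] by simp
  have \<eta>2: "\<eta>2 > 0" unfolding \<eta>2_def using e lg by simp
  show ?thesis
  proof (intro exI[of _ "min \<eta>1 \<eta>2"] conjI allI impI)
    show "0 < min \<eta>1 \<eta>2" using \<eta>1 \<eta>2 by simp
    fix s assume s: "0 \<le> s \<and> s < min \<eta>1 \<eta>2"
    have eq: "(\<lambda>x. exp (- l * s) * T s g x - g x)
        = (\<lambda>x. exp (- l * s) * (T s g x - g x) + (exp (- l * s) - 1) * g x)"
      by (auto simp: algebra_simps)
    have "l1norm M (\<lambda>x. exp (- l * s) * T s g x - g x)
        \<le> l1norm M (\<lambda>x. exp (- l * s) * (T s g x - g x)) + l1norm M (\<lambda>x. (exp (- l * s) - 1) * g x)"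
      unfolding eq using orbit_integrable[of s] s g by (intro l1norm_add_le) auto
    also have "\<dots> = exp (- l * s) * l1norm M (\<lambda>x. T s g x - g x) + \<bar>exp (- l * s) - 1\<bar> * l1norm M g"
      by (simp add: l1norm_cmult)
    also have "\<dots> \<le> 1 * (e/2) + (l * s) * l1norm M g"
    proof (rule add_mono[OF mult_mono mult_right_mono])
      show "exp (- l * s) \<le> 1" using l s by simp
      show "l1norm M (\<lambda>x. T s g x - g x) \<le> e/2" using \<eta>1(2)[of s] s by (simp add: less_imp_le)
      have a: "1 - l * s \<le> exp (- l * s)" using exp_ge_add_one_self[of "- l * s"] by simp
      have b: "exp (- l * s) \<le> 1" using l s by simp
      have "\<bar>exp (- l * s) - 1\<bar> = 1 - exp (- l * s)" using b by simp
      then show "\<bar>exp (- l * s) - 1\<bar> \<le> l * s" using a by linarith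
    qed (use l1norm_nonneg in auto)
    also have "(l * s) * l1norm M g \<le> \<eta>2 * (l * l1norm M g)"
      using s l l1norm_nonneg[of M g] by (simp add: mult_right_mono)
    also have "\<eta>2 * (l * l1norm M g) < e/2"
      unfolding \<eta>2_def using e lg by (simp add: field_simps)
    finally show "l1norm M (\<lambda>x. exp (- l * s) * T s g x - g x) < e" by simp
  qed
qed

lemma laplace_sum_initial_close:
  assumes \<eta>: "\<forall>s. 0 \<le> s \<and> s < \<eta> \<longrightarrow> l1norm M (\<lambda>x. exp (- l * s) * T s g x - g x) < e"
    and d: "real D * mesh n \<le> \<eta>"
  shows "l1norm M (\<lambda>x. laplace_sum n D x - (real D * mesh n) * g x) \<le> (real D * mesh n) * e"
proof -
  have eq: "(\<lambda>x. laplace_sum n D x - (real D * mesh n) * g x)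
      = (\<lambda>x. \<Sum>k<D. mesh n * (exp (- l * (real k * mesh n)) * T (real k * mesh n) g x - g x))"
  proof
    fix x
    have "(\<Sum>k<D. mesh n * (exp (- l * (real k * mesh n)) * T (real k * mesh n) g x - g x))
        = (\<Sum>k<D. mesh n * exp (- l * (real k * mesh n)) * T (real k * mesh n) g x) - (\<Sum>k<D. mesh n * g x)"
      unfolding right_diff_distrib sum_subtractf by (simp add: mult.assoc)
    then show "laplace_sum n D x - (real D * mesh n) * g x
        = (\<Sum>k<D. mesh n * (exp (- l * (real k * mesh n)) * T (real k * mesh n) g x - g x))"
      unfolding laplace_sum_def by simp
  qed
  have "l1norm M (\<lambda>x. laplace_sum n D x - (real D * mesh n) * g x)
      \<le> (\<Sum>k<D. l1norm M (\<lambda>x. mesh n * (exp (- l * (real k * mesh n)) * T (real k * mesh n) g x - g x)))"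
    unfolding eq by (intro l1norm_sum_le) (auto intro!: orbit_integrable grid_nonneg g)
  also have "\<dots> \<le> (\<Sum>k<D. mesh n * e)"
  proof (rule sum_mono)
    fix k assume k: "k \<in> {..<D}"
    have "real k * mesh n < real D * mesh n" using k mesh_pos[of n] by simp
    then have "l1norm M (\<lambda>x. exp (- l * (real k * mesh n)) * T (real k * mesh n) g x - g x) < e"
      using \<eta> d grid_nonneg[of k n] by auto
    then show "l1norm M (\<lambda>x. mesh n * (exp (- l * (real k * mesh n)) * T (real k * mesh n) g x - g x))
        \<le> mesh n * e"
      using l1norm_cmult[of M "mesh n"] mesh_pos[of n] by (simp add: mult_left_mono)
  qed
  also have "\<dots> = (real D * mesh n) * e" by simp
  finally show ?thesis .
qed

definition laplace_approx :: "nat \<Rightarrow> 'a \<Rightarrow> real" where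
  "laplace_approx n = laplace_sum n (n * 2 ^ n)"

lemma laplace_approx_integrable: "integrable M (laplace_approx n)"
  unfolding laplace_approx_def by (rule laplace_sum_integrable)

lemma laplace_sum_refine:
  assumes nm: "n \<le> m"
  defines "v \<equiv> \<lambda>y. laplace_sum m (2 ^ (m - n)) y - mesh n * g y"
  shows "AE x in M. laplace_sum m (K * 2 ^ (m - n)) x - laplace_sum n K x
      = (\<Sum>k<K. exp (- l * (real k * mesh n)) * T (real k * mesh n) v x)"
proof -
  define t where "t k = real k * mesh n" for k
  have t0: "0 \<le> t k" for k unfolding t_def by (rule grid_nonneg)
  have "AE x in M. \<forall>k\<in>{..<K}. T (t k) v x = T (t k) (laplace_sum m (2 ^ (m - n))) x - mesh n * T (t k) g x"
  proof (rule eventually_ball_finite, simp, intro ballI)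
    fix k
    have "AE x in M. T (t k) v x = T (t k) (laplace_sum m (2 ^ (m - n))) x - T (t k) (\<lambda>y. mesh n * g y) x"
      unfolding v_def by (rule op_diff[OF sg_op[OF T t0]]) (use laplace_sum_integrable g in auto)
    with op_cmult[OF sg_op[OF T t0] g, where a="mesh n"]
    show "AE x in M. T (t k) v x = T (t k) (laplace_sum m (2 ^ (m - n))) x - mesh n * T (t k) g x"
      by eventually_elim simp
  qed
  with laplace_sum_regroup[OF nm, of K] show ?thesis
    unfolding t_def[symmetric]
  proof eventually_elim
    case (elim x)
    have "laplace_sum n K x = (\<Sum>k<K. exp (- l * t k) * (mesh n * T (t k) g x))"
      unfolding laplace_sum_def t_def by (simp add: algebra_simps)
    with elim(1) have "laplace_sum m (K * 2 ^ (m - n)) x - laplace_sum n K x = (\<Sum>k<K.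
        exp (- l * t k) * T (t k) (laplace_sum m (2 ^ (m - n))) x - exp (- l * t k) * (mesh n * T (t k) g x))"
      by (simp add: sum_subtractf)
    also have "\<dots> = (\<Sum>k<K. exp (- l * t k) * T (t k) v x)"
      using elim(2) by (intro sum.cong) (simp_all add: right_diff_distrib)
    finally show ?case .
  qed
qed

lemma laplace_approx_dist_le:
  assumes nm: "n \<le> m"
    and \<eta>: "\<forall>s. 0 \<le> s \<and> s < \<eta> \<longrightarrow> l1norm M (\<lambda>x. exp (- l * s) * T s g x - g x) < e"
    and dn: "mesh n \<le> \<eta>" and e: "e \<ge> 0"
  shows "l1norm M (\<lambda>x. laplace_approx m x - laplace_approx n x)
    \<le> exp (- l * real n) * (1 / l + 1) * l1norm M g + (1 / l + 1) * e"
proof -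
  define B :: nat where "B = 2 ^ (m - n)"
  define K :: nat where "K = n * 2 ^ n"
  have KB: "K * B = n * 2 ^ m" unfolding K_def B_def using nm by (simp add: power_add[symmetric])
  define v where "v = (\<lambda>y. laplace_sum m B y - mesh n * g y)"
  have vI: "integrable M v" unfolding v_def using laplace_sum_integrable g by auto
  have "l1norm M v \<le> mesh n * e"
    using laplace_sum_initial_close[OF \<eta>, of B m] mesh_mult_pow2[OF nm] dn
    unfolding v_def B_def by (simp add: mult.commute)
  then have bound: "(1 / l + 1) * l1norm M v \<le> mesh n * ((1 / l + 1) * e)"
    using mult_left_mono[of _ _ "1 / l + 1"] one_div_l_plus_1_pos by (simp add: algebra_simps)
  have "mesh n * l1norm M (\<lambda>x. laplace_sum m (K * B) x - laplace_approx n x)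
      = mesh n * l1norm M (\<lambda>x. \<Sum>k\<in>{0..<K}. exp (- l * (real k * mesh n)) * T (real k * mesh n) v x)"
    using laplace_sum_refine[OF nm, of K] laplace_sum_integrable laplace_approx_integrable
      sg_integrable[OF T grid_nonneg vI]
    unfolding laplace_approx_def K_def[symmetric] B_def[symmetric] v_def[symmetric]
    by (subst l1norm_cong_AE) (auto simp: lessThan_atLeast0)
  also have "\<dots> \<le> (1 / l + 1) * l1norm M v" using damped_grid_sum_le[OF vI, of 0 K n] by simp
  finally have "mesh n * l1norm M (\<lambda>x. laplace_sum m (K * B) x - laplace_approx n x)
      \<le> mesh n * ((1 / l + 1) * e)"
    using bound by linarith
  then have "l1norm M (\<lambda>x. laplace_sum m (K * B) x - laplace_approx n x) \<le> (1 / l + 1) * e"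
    using mesh_pos[of n] by simp
  moreover have "l1norm M (\<lambda>x. laplace_approx m x - laplace_sum m (K * B) x)
      \<le> exp (- l * real n) * (1 / l + 1) * l1norm M g"
    using laplace_sum_tail[of "n * 2 ^ m" "m * 2 ^ m" m] nm
    unfolding laplace_approx_def KB grid_mesh_eq by simp
  moreover have "l1norm M (\<lambda>x. laplace_approx m x - laplace_approx n x)
      \<le> l1norm M (\<lambda>x. laplace_approx m x - laplace_sum m (K * B) x)
        + l1norm M (\<lambda>x. laplace_sum m (K * B) x - laplace_approx n x)"
    using laplace_approx_integrable laplace_sum_integrable laplace_approx_integrable
    by (rule l1norm_diff_triangle)
  ultimately show ?thesis by simp
qed

lemma laplace_approx_Cauchy:
  "e > 0 \<Longrightarrow> \<exists>N. \<forall>i\<ge>N. \<forall>j\<ge>N. l1norm M (\<lambda>x. laplace_approx i x - laplace_approx j x) < e"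
proof -
  assume e: "e > 0"
  define \<epsilon> where "\<epsilon> = e / (4 * (1 / l + 1))"
  have \<epsilon>: "\<epsilon> > 0" unfolding \<epsilon>_def using e one_div_l_plus_1_pos by simp
  obtain \<eta> where \<eta>: "\<eta> > 0" "\<forall>s. 0 \<le> s \<and> s < \<eta> \<longrightarrow> l1norm M (\<lambda>x. exp (- l * s) * T s g x - g x) < \<epsilon>"
    using damped_orbit_close[OF \<epsilon>] by blast
  obtain N1 where N1: "\<forall>n\<ge>N1. mesh n < \<eta>"
    using mesh_eventually_less[OF \<eta>(1)] unfolding eventually_sequentially by blast
  obtain N2 where N2: "\<forall>n\<ge>N2. exp (- l * real n) * ((1 / l + 1) * l1norm M g) < e / 4"
    using tail_bound_eventually_less[of "e/4"] e unfolding eventually_sequentially by auto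
  have le: "l1norm M (\<lambda>x. laplace_approx j x - laplace_approx i x) < e" if ij: "max N1 N2 \<le> i" "i \<le> j" for i j
  proof -
    have "l1norm M (\<lambda>x. laplace_approx j x - laplace_approx i x)
        \<le> exp (- l * real i) * (1 / l + 1) * l1norm M g + (1 / l + 1) * \<epsilon>"
      using laplace_approx_dist_le[OF ij(2) \<eta>(2)] N1 ij \<epsilon> by (auto intro: less_imp_le)
    also have "\<dots> < e / 4 + e / 4"
    proof (rule add_less_le_mono)
      show "(1 / l + 1) * \<epsilon> \<le> e / 4" unfolding \<epsilon>_def using one_div_l_plus_1_pos by (simp add: field_simps)
    qed (use N2 ij in \<open>auto simp: mult.assoc\<close>)
    finally show ?thesis using e by linarith
  qed
  show ?thesis
  proof (intro exI[of _ "max N1 N2"] allI impI)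
    fix i j assume "max N1 N2 \<le> i" "max N1 N2 \<le> j"
    then show "l1norm M (\<lambda>x. laplace_approx i x - laplace_approx j x) < e"
      using le[of i j] le[of j i] l1norm_minus_commute[of M "laplace_approx i" "laplace_approx j"]
      by (cases "i \<le> j") auto
  qed
qed

lemma laplace_approx_converges: obtains f where "l1_lim M laplace_approx f sequentially"
  using l1_complete[OF laplace_approx_integrable laplace_approx_Cauchy] by blast

lemma laplace_approx_nonneg:
  assumes "AE x in M. 0 \<le> g x"
  shows "AE x in M. 0 \<le> laplace_approx n x"
proof -
  have "AE x in M. \<forall>k\<in>{..<n * 2 ^ n}. 0 \<le> T (real k * mesh n) g x"
    by (intro eventually_ball_finite ballI) (auto intro!: op_nonneg[OF sg_op[OF T grid_nonneg] g assms])
  then show ?thesis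
  proof eventually_elim
    case (elim x)
    then show ?case unfolding laplace_approx_def laplace_sum_def using mesh_pos[of n]
      by (intro sum_nonneg) (auto intro!: mult_nonneg_nonneg less_imp_le)
  qed
qed

text \<open>For dyadic \<open>d\<close>, shifting the Riemann sums gives \<open>T(d) F \<approx> e\<^sup>l\<^sup>d (F - \<integral>\<^sub>0\<^sup>d e\<^sup>-\<^sup>l\<^sup>s T(s) g ds) \<approx> e\<^sup>l\<^sup>d (F - d g)\<close>.\<close>

lemma laplace_approx_shift_le:
  assumes \<eta>: "\<forall>s. 0 \<le> s \<and> s < \<eta> \<longrightarrow> l1norm M (\<lambda>x. exp (- l * s) * T s g x - g x) < \<epsilon>"
    and d: "d = real j * mesh p" "d \<le> \<eta>" and n: "p \<le> n"
  shows "l1norm M (\<lambda>x. T d (laplace_approx n) x - exp (l * d) * laplace_approx n x + exp (l * d) * d * g x)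
    \<le> exp (l * d) * (exp (- l * real n) * (1 / l + 1) * l1norm M g + d * \<epsilon>)"
proof -
  define D :: nat where "D = j * 2 ^ (n - p)"
  define N :: nat where "N = n * 2 ^ n"
  have Dd: "real D * mesh n = d" unfolding D_def d(1) using mesh_mult_pow2[OF n] by (simp add: algebra_simps)
  have d0: "0 \<le> d" using Dd grid_nonneg by metis
  have "AE x in M. T d (laplace_sum n N) x = exp (l * d) * (laplace_sum n (N + D) x - laplace_sum n D x)"
    using laplace_sum_shift[of D n N] unfolding Dd .
  then have "AE x in M. T d (laplace_approx n) x - exp (l * d) * laplace_approx n x + exp (l * d) * d * g x
      = exp (l * d) * ((laplace_sum n (N + D) x - laplace_sum n N x) + (d * g x - laplace_sum n D x))"
    unfolding laplace_approx_def N_def[symmetric] by eventually_elim (simp add: algebra_simps)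
  then have "l1norm M (\<lambda>x. T d (laplace_approx n) x - exp (l * d) * laplace_approx n x + exp (l * d) * d * g x)
      = exp (l * d) * l1norm M (\<lambda>x. (laplace_sum n (N + D) x - laplace_sum n N x) + (d * g x - laplace_sum n D x))"
    using laplace_approx_integrable laplace_sum_integrable g sg_integrable[OF T d0 laplace_approx_integrable]
    by (subst l1norm_cong_AE) (auto simp: l1norm_cmult)
  also have "\<dots> \<le> exp (l * d) * (l1norm M (\<lambda>x. laplace_sum n (N + D) x - laplace_sum n N x)
      + l1norm M (\<lambda>x. d * g x - laplace_sum n D x))"
    using laplace_sum_integrable g by (intro mult_left_mono l1norm_add_le) auto
  also have "\<dots> \<le> exp (l * d) * (exp (- l * real n) * (1 / l + 1) * l1norm M g + d * \<epsilon>)"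
  proof (intro mult_left_mono add_mono)
    show "l1norm M (\<lambda>x. laplace_sum n (N + D) x - laplace_sum n N x)
        \<le> exp (- l * real n) * (1 / l + 1) * l1norm M g"
      using laplace_sum_tail[of N "N + D" n] unfolding N_def grid_mesh_eq by simp
    show "l1norm M (\<lambda>x. d * g x - laplace_sum n D x) \<le> d * \<epsilon>"
      using laplace_sum_initial_close[OF \<eta>, of D n] d l1norm_minus_commute[of M "\<lambda>x. d * g x"]
      unfolding Dd by simp
  qed simp_all
  finally show ?thesis .
qed

lemma laplace_limit_shift_le:
  assumes f: "l1_lim M laplace_approx f sequentially"
    and \<eta>: "\<forall>s. 0 \<le> s \<and> s < \<eta> \<longrightarrow> l1norm M (\<lambda>x. exp (- l * s) * T s g x - g x) < \<epsilon>"
    and \<epsilon>: "\<epsilon> > 0" and d: "d = real j * mesh p" "0 < d" "d \<le> \<eta>"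
  shows "l1norm M (\<lambda>x. T d f x - exp (l * d) * f x + exp (l * d) * d * g x) \<le> 2 * exp (l * d) * d * \<epsilon>"
proof (rule l1_lim_l1norm_le)
  have d0: "0 \<le> d" using d by simp
  have "l1_lim M (\<lambda>n x. 1 * T d (laplace_approx n) x + (- exp (l * d)) * laplace_approx n x)
      (\<lambda>x. 1 * T d f x + (- exp (l * d)) * f x) sequentially"
    by (rule l1_lim_linear[OF op_l1_lim[OF sg_op[OF T d0] f] f])
  from l1_lim_linear[OF this l1_lim_const[OF g], of 1 "exp (l * d) * d"]
  show "l1_lim M (\<lambda>n x. T d (laplace_approx n) x - exp (l * d) * laplace_approx n x + exp (l * d) * d * g x)
      (\<lambda>x. T d f x - exp (l * d) * f x + exp (l * d) * d * g x) sequentially"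
    by simp
  have "\<forall>\<^sub>F n in sequentially. p \<le> n \<and> exp (- l * real n) * ((1 / l + 1) * l1norm M g) < d * \<epsilon>"
    using tail_bound_eventually_less[of "d * \<epsilon>"] d \<epsilon> eventually_ge_at_top[of p]
    by (auto intro: eventually_conj)
  then show "\<forall>\<^sub>F n in sequentially. l1norm M (\<lambda>x. T d (laplace_approx n) x - exp (l * d) * laplace_approx n x
      + exp (l * d) * d * g x) \<le> 2 * exp (l * d) * d * \<epsilon>"
  proof eventually_elim
    case (elim n)
    then have small: "exp (- l * real n) * (1 / l + 1) * l1norm M g + d * \<epsilon> \<le> 2 * d * \<epsilon>"
      by (simp add: mult.assoc mult.commute[of \<epsilon>])
    have "l1norm M (\<lambda>x. T d (laplace_approx n) x - exp (l * d) * laplace_approx n x + exp (l * d) * d * g x)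
        \<le> exp (l * d) * (exp (- l * real n) * (1 / l + 1) * l1norm M g + d * \<epsilon>)"
      using laplace_approx_shift_le[OF \<eta> d(1,3)] elim by blast
    also have "\<dots> \<le> exp (l * d) * (2 * d * \<epsilon>)"
      using small by (rule mult_left_mono) simp
    finally show ?case by (simp add: ac_simps)
  qed
qed simp

lemma laplace_limit_dyadic_quotient_le:
  assumes f: "l1_lim M laplace_approx f sequentially"
    and \<eta>: "\<forall>s. 0 \<le> s \<and> s < \<eta> \<longrightarrow> l1norm M (\<lambda>x. exp (- l * s) * T s g x - g x) < \<epsilon>"
    and \<epsilon>: "\<epsilon> > 0" and d: "d = real j * mesh p" "0 < d" "d \<le> \<eta>"
    and sm: "exp (l * d) \<le> 2" "\<bar>(exp (l * d) - 1) / d - l\<bar> * l1norm M f \<le> \<epsilon>"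
      "(exp (l * d) - 1) * l1norm M g \<le> \<epsilon>"
  shows "l1norm M (\<lambda>x. (T d f x - f x) / d - (l * f x - g x)) \<le> 6 * \<epsilon>"
proof -
  have fI: "integrable M f" using l1_limD(1)[OF f] .
  have d0: "0 \<le> d" using d by simp
  define e where "e = exp (l * d)"
  have e1: "1 \<le> e" unfolding e_def using l d by simp
  let ?a = "\<lambda>x. (1 / d) * (T d f x - e * f x + e * d * g x)"
  let ?b = "\<lambda>x. ((e - 1) / d - l) * f x"
  let ?c = "\<lambda>x. (1 - e) * g x"
  have eq: "(\<lambda>x. (T d f x - f x) / d - (l * f x - g x)) = (\<lambda>x. ?a x + ?b x + ?c x)"
  proof
    fix x
    have dn: "d \<noteq> 0" using d(2) by simp
    show "(T d f x - f x) / d - (l * f x - g x) = ?a x + ?b x + ?c x"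
      using dn by (simp add: field_simps)
  qed
  have TdI: "integrable M (T d f)" using sg_integrable[OF T d0 fI] .
  have "l1norm M (\<lambda>x. (T d f x - f x) / d - (l * f x - g x)) \<le> l1norm M ?a + l1norm M ?b + l1norm M ?c"
    unfolding eq using TdI fI g by (intro l1norm_add3_le) auto
  also have "l1norm M ?a = (1 / d) * l1norm M (\<lambda>x. T d f x - e * f x + e * d * g x)"
    using l1norm_cmult[of M "1/d" "\<lambda>x. T d f x - e * f x + e * d * g x"] d(2) by simp
  also have "\<dots> \<le> (1 / d) * (2 * e * d * \<epsilon>)"
    using laplace_limit_shift_le[OF f \<eta> \<epsilon> d] d unfolding e_def by (intro mult_left_mono) auto
  also have "(1 / d) * (2 * e * d * \<epsilon>) = 2 * e * \<epsilon>" using d(2) by simp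
  also have "\<dots> \<le> 4 * \<epsilon>" using sm(1) \<epsilon> unfolding e_def by simp
  also have "l1norm M ?b \<le> \<epsilon>" using sm(2) unfolding e_def by (simp add: l1norm_cmult)
  also have "l1norm M ?c = (e - 1) * l1norm M g" using e1 by (simp add: l1norm_cmult)
  also have "\<dots> \<le> \<epsilon>" using sm(3) unfolding e_def .
  finally show ?thesis by simp
qed

lemma laplace_limit_quotient_le:
  assumes f: "l1_lim M laplace_approx f sequentially" and \<epsilon>: "\<epsilon> > 0"
    and \<eta>: "\<forall>s. 0 \<le> s \<and> s < \<eta> \<longrightarrow> l1norm M (\<lambda>x. exp (- l * s) * T s g x - g x) < \<epsilon>"
    and \<eta>': "\<forall>d. 0 < d \<and> d < \<eta>' \<longrightarrow> exp (l * d) \<le> 2 \<and>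
        \<bar>(exp (l * d) - 1) / d - l\<bar> * l1norm M f \<le> \<epsilon> \<and> (exp (l * d) - 1) * l1norm M g \<le> \<epsilon>"
    and h: "0 < h" "h < min \<eta> \<eta>'"
  shows "l1norm M (\<lambda>x. (T h f x - f x) / h - (l * f x - g x)) \<le> 8 * \<epsilon>"
proof -
  have fI: "integrable M f" using l1_limD(1)[OF f] .
  define c where "c = (\<lambda>x. l * f x - g x)"
  have cI: "integrable M c" unfolding c_def using fI g by auto
  have cn: "0 \<le> l1norm M c" by (rule l1norm_nonneg)
  have h\<epsilon>: "h * \<epsilon> > 0" using h \<epsilon> by simp
  obtain \<rho> where \<rho>: "\<rho> > 0" "\<And>r. 0 \<le> r \<Longrightarrow> r < \<rho> \<Longrightarrow> l1norm M (\<lambda>x. T r f x - f x) < h * \<epsilon>"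
    using sg_close_to_identity[OF T fI h\<epsilon>] by blast
  \<comment> \<open>approximate \<open>h\<close> from below by a dyadic \<open>d\<close>, so closely that \<open>T(h) f \<approx> T(d) f\<close> and \<open>d/h \<approx> 1\<close>\<close>
  define b where "b = min \<rho> (min (h * \<epsilon> / (l1norm M c + 1)) (h / 2))"
  have b: "0 < b" "b \<le> h" unfolding b_def using \<rho> h\<epsilon> h cn by auto
  obtain j p where jp: "real j * mesh p \<le> h" "h - real j * mesh p < b"
    using dyadic_approx_below[OF b] by blast
  define d where "d = real j * mesh p"
  define r where "r = h - d"
  have d: "0 < d" "d \<le> h" using jp unfolding d_def b_def by auto
  have r: "0 \<le> r" "r < \<rho>" "r < h * \<epsilon> / (l1norm M c + 1)"
    using jp unfolding r_def d_def b_def by auto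
  have d0: "0 \<le> d" using d by simp
  have TdI: "integrable M (T d f)" using sg_integrable[OF T d0 fI] .
  have ThI: "integrable M (T h f)" using sg_integrable[OF T _ fI] h by simp
  have "l1norm M (\<lambda>x. T h f x - T d f x) \<le> l1norm M (\<lambda>x. T r f x - f x)"
    using sg_shift_dist_le[OF T d0 r(1) fI] unfolding r_def by simp
  also have "\<dots> < h * \<epsilon>" by (rule \<rho>(2)[OF r(1,2)])
  finally have shift: "l1norm M (\<lambda>x. T h f x - T d f x) < h * \<epsilon>" .
  have dyadic: "l1norm M (\<lambda>x. (T d f x - f x) / d - c x) \<le> 6 * \<epsilon>"
    unfolding c_def
  proof (rule laplace_limit_dyadic_quotient_le[OF f \<eta> \<epsilon> d_def d(1)])
    show "d \<le> \<eta>" using d h by simp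
    show "exp (l * d) \<le> 2" "\<bar>(exp (l * d) - 1) / d - l\<bar> * l1norm M f \<le> \<epsilon>"
      "(exp (l * d) - 1) * l1norm M g \<le> \<epsilon>" using \<eta>' d h by auto
  qed
  have "l1norm M (\<lambda>x. (T h f x - f x) / h - c x) \<le> l1norm M (\<lambda>x. T h f x - T d f x) / h
      + d / h * l1norm M (\<lambda>x. (T d f x - f x) / d - c x) + (1 - d / h) * l1norm M c"
    using l1norm_quotient_split_le[OF ThI TdI fI cI d(1,2)] .
  also have "l1norm M (\<lambda>x. T h f x - T d f x) / h \<le> \<epsilon>"
    using shift h by (simp add: pos_divide_le_eq mult.commute)
  also have "d / h * l1norm M (\<lambda>x. (T d f x - f x) / d - c x) \<le> 1 * (6 * \<epsilon>)"
    using dyadic d h by (intro mult_mono) (auto simp: l1norm_nonneg)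
  also have "(1 - d / h) * l1norm M c \<le> \<epsilon>"
  proof -
    have "1 - d / h = r / h" using h unfolding r_def by (simp add: field_simps)
    also have "\<dots> \<le> \<epsilon> / (l1norm M c + 1)"
      using r(3) h cn by (simp add: field_simps)
    finally have "(1 - d / h) * l1norm M c \<le> \<epsilon> / (l1norm M c + 1) * l1norm M c"
      using cn by (rule mult_right_mono)
    also have "\<dots> \<le> \<epsilon>" using cn \<epsilon> by (simp add: field_simps)
    finally show ?thesis .
  qed
  finally show ?thesis unfolding c_def by simp
qed

lemma laplace_limit_has_gen:
  assumes f: "l1_lim M laplace_approx f sequentially"
  shows "has_gen M T f (\<lambda>x. l * f x - g x)"
proof -
  have fI: "integrable M f" using l1_limD(1)[OF f] .
  have "\<forall>\<^sub>F h in at_right 0. l1norm M (\<lambda>x. (T h f x - f x) / h - (l * f x - g x)) < \<tau>"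
    if \<tau>: "\<tau> > 0" for \<tau>
  proof -
    define \<epsilon> where "\<epsilon> = \<tau> / 16"
    have \<epsilon>: "\<epsilon> > 0" unfolding \<epsilon>_def using \<tau> by simp
    obtain \<eta> where \<eta>: "\<eta> > 0" "\<forall>s. 0 \<le> s \<and> s < \<eta> \<longrightarrow> l1norm M (\<lambda>x. exp (- l * s) * T s g x - g x) < \<epsilon>"
      using damped_orbit_close[OF \<epsilon>] by blast
    obtain \<eta>' where \<eta>': "\<eta>' > 0" "\<forall>d. 0 < d \<and> d < \<eta>' \<longrightarrow> exp (l * d) \<le> 2 \<and>
        \<bar>(exp (l * d) - 1) / d - l\<bar> * l1norm M f \<le> \<epsilon> \<and> (exp (l * d) - 1) * l1norm M g \<le> \<epsilon>"
      using exp_small_steps[OF \<epsilon> l1norm_nonneg l1norm_nonneg] by blast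
    have "l1norm M (\<lambda>x. (T h f x - f x) / h - (l * f x - g x)) < \<tau>" if "0 < h" "h < min \<eta> \<eta>'" for h
      using laplace_limit_quotient_le[OF f \<epsilon> \<eta>(2) \<eta>'(2) that] \<tau> unfolding \<epsilon>_def by simp
    moreover have "0 < min \<eta> \<eta>'" using \<eta> \<eta>' by simp
    ultimately show ?thesis unfolding eventually_at_right_field by blast
  qed
  then have "((\<lambda>h. l1norm M (\<lambda>x. (T h f x - f x) / h - (l * f x - g x))) \<longlongrightarrow> 0) (at_right 0)"
    by (intro order_tendstoI) (auto intro!: always_eventually less_le_trans[OF _ l1norm_nonneg])
  then show ?thesis unfolding has_gen_def using fI g by simp
qed

lemma resolvent_equation_solvable:
  "\<exists>f. has_gen M T f (\<lambda>x. l * f x - g x) \<and> ((AE x in M. 0 \<le> g x) \<longrightarrow> (AE x in M. 0 \<le> f x))"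
proof -
  obtain f where f: "l1_lim M laplace_approx f sequentially" by (rule laplace_approx_converges)
  have "(AE x in M. 0 \<le> g x) \<longrightarrow> (AE x in M. 0 \<le> f x)"
  proof
    assume "AE x in M. 0 \<le> g x"
    then have "\<forall>\<^sub>F n in sequentially. AE x in M. 0 \<le> laplace_approx n x" using laplace_approx_nonneg by simp
    from l1_lim_AE_ge_const[OF _ f _ this] show "AE x in M. 0 \<le> f x" by simp
  qed
  with laplace_limit_has_gen[OF f] show ?thesis by blast
qed

end

section \<open>Generators and resolvents\<close>

context
  fixes M :: "'a measure" and T :: "real \<Rightarrow> ('a \<Rightarrow> real) \<Rightarrow> ('a \<Rightarrow> real)"
  assumes T: "substochastic_sg M T"
begin

lemma has_genD:
  assumes "has_gen M T f c"
  shows "integrable M f" "integrable M c"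
    "((\<lambda>h. l1norm M (\<lambda>x. (T h f x - f x) / h - c x)) \<longlongrightarrow> 0) (at_right 0)"
  using assms unfolding has_gen_def by auto

lemma has_gen_iff_l1_lim:
  "has_gen M T f c \<longleftrightarrow> integrable M f \<and> l1_lim M (\<lambda>h x. (T h f x - f x) / h) c (at_right 0)"
proof -
  have "\<forall>\<^sub>F h in at_right 0. integrable M (\<lambda>x. (T h f x - f x) / h)" if "integrable M f"
    using eventually_at_right_less[of 0] by eventually_elim (use that sg_integrable[OF T] in auto)
  then show ?thesis unfolding has_gen_def l1_lim_def by auto
qed

lemma has_gen_cong_AE:
  assumes g: "has_gen M T f c" and f': "integrable M f'" and c': "integrable M c'"
    and ef: "AE x in M. f x = f' x" and ec: "AE x in M. c x = c' x"
  shows "has_gen M T f' c'"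
  unfolding has_gen_iff_l1_lim
proof (intro conjI f' l1_lim_cong_AE[OF _ c' ec])
  show "l1_lim M (\<lambda>h x. (T h f x - f x) / h) c (at_right 0)" using g by (simp add: has_gen_iff_l1_lim)
  show "\<forall>\<^sub>F h in at_right 0. integrable M (\<lambda>x. (T h f' x - f' x) / h) \<and>
      (AE x in M. (T h f x - f x) / h = (T h f' x - f' x) / h)"
    using eventually_at_right_less[of 0]
  proof eventually_elim
    case (elim h)
    then have "AE x in M. T h f x = T h f' x"
      using has_genD(1)[OF g] ef by (intro op_AE_cong[OF sg_op[OF T]]) auto
    with ef show ?case using sg_integrable[OF T _ f', of h] elim f' by (auto elim: AE_mp)
  qed
qed

lemma has_gen_linear:
  assumes g1: "has_gen M T f1 c1" and g2: "has_gen M T f2 c2"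
  shows "has_gen M T (\<lambda>x. a * f1 x + b * f2 x) (\<lambda>x. a * c1 x + b * c2 x)"
  unfolding has_gen_iff_l1_lim
proof (intro conjI)
  note d1 = has_genD[OF g1] and d2 = has_genD[OF g2]
  show "integrable M (\<lambda>x. a * f1 x + b * f2 x)" using d1 d2 by auto
  show "l1_lim M (\<lambda>h x. (T h (\<lambda>x. a * f1 x + b * f2 x) x - (a * f1 x + b * f2 x)) / h)
      (\<lambda>x. a * c1 x + b * c2 x) (at_right 0)"
  proof (rule l1_lim_cong_AE)
    show "l1_lim M (\<lambda>h x. a * ((T h f1 x - f1 x) / h) + b * ((T h f2 x - f2 x) / h))
        (\<lambda>x. a * c1 x + b * c2 x) (at_right 0)"
      using g1 g2 by (intro l1_lim_linear) (simp_all add: has_gen_iff_l1_lim)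
    show "\<forall>\<^sub>F h in at_right 0. integrable M (\<lambda>x. (T h (\<lambda>x. a * f1 x + b * f2 x) x - (a * f1 x + b * f2 x)) / h)
        \<and> (AE x in M. a * ((T h f1 x - f1 x) / h) + b * ((T h f2 x - f2 x) / h)
          = (T h (\<lambda>x. a * f1 x + b * f2 x) x - (a * f1 x + b * f2 x)) / h)"
      using eventually_at_right_less[of 0]
    proof eventually_elim
      case (elim h)
      then have "AE x in M. T h (\<lambda>x. a * f1 x + b * f2 x) x = a * T h f1 x + b * T h f2 x"
        by (intro op_linear[OF sg_op[OF T] d1(1) d2(1)]) simp
      then show ?case using elim d1(1) d2(1) sg_integrable[OF T, of h "\<lambda>x. a * f1 x + b * f2 x"]
        by (auto elim!: eventually_mono simp: field_simps)
    qed
  qed (use d1 d2 in auto)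
qed

lemma sg_dissipative:
  assumes f: "integrable M f" and h: "0 < h" and l: "0 \<le> l"
  shows "l * l1norm M f \<le> l1norm M (\<lambda>x. l * f x - (T h f x - f x) / h)"
proof -
  have ThI: "integrable M (T h f)" using sg_integrable[OF T _ f] h by simp
  have "(1 + l * h) * l1norm M f = l1norm M (\<lambda>x. ((1 + l * h) * f x - T h f x) + T h f x)"
    using l h by (simp add: l1norm_cmult)
  also have "\<dots> \<le> l1norm M (\<lambda>x. (1 + l * h) * f x - T h f x) + l1norm M f"
    using l1norm_add_le[of M "\<lambda>x. (1 + l * h) * f x - T h f x" "T h f"] sg_l1norm_le[OF T _ f, of h] f ThI h
    by simp
  also have "(\<lambda>x. (1 + l * h) * f x - T h f x) = (\<lambda>x. h * (l * f x - (T h f x - f x) / h))"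
    using h by (simp add: fun_eq_iff field_simps)
  also have "l1norm M \<dots> = h * l1norm M (\<lambda>x. l * f x - (T h f x - f x) / h)"
    using h by (simp add: l1norm_cmult)
  finally show ?thesis using h by (simp add: algebra_simps)
qed

lemma has_gen_dissipative:
  assumes g: "has_gen M T f c" and l: "l > 0"
  shows "l * l1norm M f \<le> l1norm M (\<lambda>x. l * f x - c x)"
proof -
  note d = has_genD[OF g]
  let ?u = "\<lambda>h x. 1 * (l * f x) + (-1) * ((T h f x - f x) / h)"
  have "l1_lim M ?u (\<lambda>x. 1 * (l * f x) + (-1) * c x) (at_right 0)"
    using g d(1) by (intro l1_lim_linear l1_lim_const) (auto simp: has_gen_iff_l1_lim)
  from l1_lim_l1norm_tendsto[OF this]
  have "((\<lambda>h. l1norm M (?u h)) \<longlongrightarrow> l1norm M (\<lambda>x. l * f x - c x)) (at_right 0)" by simp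
  moreover have "\<forall>\<^sub>F h in at_right 0. l * l1norm M f \<le> l1norm M (?u h)"
    using eventually_at_right_less[of 0]
  proof eventually_elim
    case (elim h)
    have "?u h = (\<lambda>x. l * f x - (T h f x - f x) / h)" by (simp add: fun_eq_iff field_split_simps)
    then show ?case using sg_dissipative[OF d(1) elim] l by simp
  qed
  ultimately show ?thesis by (intro tendsto_le[OF trivial_limit_at_right_real]) auto
qed

lemma has_gen_resolvent_unique:
  assumes g1: "has_gen M T f1 c1" and g2: "has_gen M T f2 c2" and l: "l > 0"
    and eq: "AE x in M. l * f1 x - c1 x = l * f2 x - c2 x"
  shows "AE x in M. f1 x = f2 x"
proof -
  have g: "has_gen M T (\<lambda>x. 1 * f1 x + (-1) * f2 x) (\<lambda>x. 1 * c1 x + (-1) * c2 x)"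
    by (rule has_gen_linear[OF g1 g2])
  note d1 = has_genD[OF g1] and d2 = has_genD[OF g2]
  have "l * l1norm M (\<lambda>x. 1 * f1 x + (-1) * f2 x)
      \<le> l1norm M (\<lambda>x. l * (1 * f1 x + (-1) * f2 x) - (1 * c1 x + (-1) * c2 x))"
    by (rule has_gen_dissipative[OF g l])
  also have "\<dots> = l1norm M (\<lambda>x. 0)"
    using eq d1 d2 by (intro l1norm_cong_AE) (auto elim!: eventually_mono simp: algebra_simps)
  also have "\<dots> = 0" by (simp add: l1norm_def)
  finally have "l1norm M (\<lambda>x. f1 x - f2 x) \<le> 0" using l by (simp add: mult_le_0_iff)
  then have "l1norm M (\<lambda>x. f1 x - f2 x) = 0" using l1norm_nonneg[of M] by (metis order_antisym)
  from AE_eq_0_if_l1norm_eq_0[OF _ this] d1 d2 show ?thesis by (auto elim!: eventually_mono)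
qed

lemma has_gen_unique:
  assumes "has_gen M T f c1" "has_gen M T f c2"
  shows "AE x in M. c1 x = c2 x"
  using assms by (intro l1_lim_unique[OF trivial_limit_at_right_real]) (auto simp: has_gen_iff_l1_lim)

context
  fixes l :: real
  assumes l: "l > 0"
begin

lemma is_res_resolvent: "integrable M g \<Longrightarrow> is_res M T l g (resolvent M T l g)"
proof -
  assume g: "integrable M g"
  obtain f where f: "has_gen M T f (\<lambda>x. l * f x - g x)" using resolvent_equation_solvable[OF T l g] by blast
  have "is_res M T l g f" unfolding is_res_def using f by (intro exI[of _ "\<lambda>x. l * f x - g x"]) simp
  from someI[of "is_res M T l g", OF this] show ?thesis unfolding resolvent_def .
qed

lemma has_gen_resolvent:
  "integrable M g \<Longrightarrow> has_gen M T (resolvent M T l g) (\<lambda>x. l * resolvent M T l g x - g x)"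
proof -
  assume g: "integrable M g"
  from is_res_resolvent[OF g] obtain h where h: "has_gen M T (resolvent M T l g) h"
    "AE x in M. l * resolvent M T l g x - h x = g x" unfolding is_res_def by blast
  note d = has_genD[OF h(1)]
  show ?thesis
    by (rule has_gen_cong_AE[OF h(1) d(1)]) (use d g h(2) in \<open>auto elim!: eventually_mono\<close>)
qed

lemma integrable_resolvent: "integrable M g \<Longrightarrow> integrable M (resolvent M T l g)"
  using has_genD(1)[OF has_gen_resolvent] by blast

lemma resolvent_AE_eqI:
  assumes g: "integrable M g" and f: "has_gen M T f c" and eq: "AE x in M. l * f x - c x = g x"
  shows "AE x in M. resolvent M T l g x = f x"
  by (rule has_gen_resolvent_unique[OF has_gen_resolvent[OF g] f l]) (use eq in \<open>auto elim!: eventually_mono\<close>)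

lemma resolvent_nonneg:
  assumes g: "integrable M g" and pos: "AE x in M. 0 \<le> g x"
  shows "AE x in M. 0 \<le> resolvent M T l g x"
proof -
  obtain f where f: "has_gen M T f (\<lambda>x. l * f x - g x)" "AE x in M. 0 \<le> f x"
    using resolvent_equation_solvable[OF T l g] pos by blast
  have "AE x in M. resolvent M T l g x = f x" by (rule resolvent_AE_eqI[OF g f(1)]) simp
  with f(2) show ?thesis by eventually_elim simp
qed

lemma resolvent_linear:
  assumes g1: "integrable M g1" and g2: "integrable M g2"
  shows "AE x in M. resolvent M T l (\<lambda>y. a * g1 y + b * g2 y) x
    = a * resolvent M T l g1 x + b * resolvent M T l g2 x"
proof (rule resolvent_AE_eqI)
  show "integrable M (\<lambda>y. a * g1 y + b * g2 y)" using g1 g2 by auto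
  show "has_gen M T (\<lambda>x. a * resolvent M T l g1 x + b * resolvent M T l g2 x)
      (\<lambda>x. a * (l * resolvent M T l g1 x - g1 x) + b * (l * resolvent M T l g2 x - g2 x))"
    by (rule has_gen_linear[OF has_gen_resolvent[OF g1] has_gen_resolvent[OF g2]])
qed (simp add: algebra_simps)

lemma resolvent_AE_cong:
  assumes g1: "integrable M g1" and g2: "integrable M g2" and eq: "AE x in M. g1 x = g2 x"
  shows "AE x in M. resolvent M T l g1 x = resolvent M T l g2 x"
  by (rule resolvent_AE_eqI[OF g1 has_gen_resolvent[OF g2]]) (use eq in \<open>auto elim!: eventually_mono\<close>)

lemma resolvent_eq_0_imp:
  assumes g: "integrable M g" and z: "AE x in M. resolvent M T l g x = 0"
  shows "AE x in M. g x = 0"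
proof -
  note gR = has_gen_resolvent[OF g]
  have z1: "has_gen M T (\<lambda>x. 0) (\<lambda>x. l * resolvent M T l g x - g x)"
    by (rule has_gen_cong_AE[OF gR]) (use z integrable_resolvent[OF g] g in \<open>auto elim!: eventually_mono\<close>)
  have z2: "has_gen M T (\<lambda>x. 0) (\<lambda>x. 0)"
    using has_gen_linear[OF gR gR, of 0 0] by simp
  from has_gen_unique[OF z1 z2] z show ?thesis by eventually_elim simp
qed

end

lemma resolvent_antimono:
  assumes lm: "0 < l" "l < m" and g: "integrable M g" and pos: "AE x in M. 0 \<le> g x"
  shows "AE x in M. resolvent M T m g x \<le> resolvent M T l g x"
proof -
  have m: "0 < m" using lm by simp
  define u where "u = resolvent M T m g"
  define v where "v = resolvent M T l u"
  have uI: "integrable M u" unfolding u_def by (rule integrable_resolvent[OF m g])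
  have upos: "AE x in M. 0 \<le> u x" unfolding u_def by (rule resolvent_nonneg[OF m g pos])
  have vpos: "AE x in M. 0 \<le> v x" unfolding v_def by (rule resolvent_nonneg[OF lm(1) uI upos])
  have gu: "has_gen M T u (\<lambda>x. m * u x - g x)" unfolding u_def by (rule has_gen_resolvent[OF m g])
  have gv: "has_gen M T v (\<lambda>x. l * v x - u x)" unfolding v_def by (rule has_gen_resolvent[OF lm(1) uI])
  \<comment> \<open>the resolvent identity \<open>R(l) g = R(m) g + (m - l) R(l) R(m) g\<close>\<close>
  have gf: "has_gen M T (\<lambda>x. 1 * u x + (m - l) * v x) (\<lambda>x. 1 * (m * u x - g x) + (m - l) * (l * v x - u x))"
    by (rule has_gen_linear[OF gu gv])
  have "AE x in M. resolvent M T l g x = 1 * u x + (m - l) * v x"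
    by (rule resolvent_AE_eqI[OF lm(1) g gf]) (simp add: algebra_simps)
  with vpos show ?thesis by eventually_elim (insert lm, simp add: u_def)
qed

end

text \<open>
  Exponential bounds from a generator inequality \<open>c \<le> \<mu> f\<close>: one Euler step gives
  \<open>T(\<delta>) f \<le> (1 + \<mu>\<delta>) f + \<delta> e\<^sub>\<delta>\<close> with \<open>e\<^sub>\<delta>\<close> the error of the difference quotient, and iterating it
  \<open>n\<close> times with \<open>\<delta> = t/n\<close> bounds \<open>T(t) f - e\<^sup>\<mu>\<^sup>t f\<close> by a function of norm \<open>\<le> t e\<^sup>\<mu>\<^sup>t \<parallel>e\<^sub>\<delta>\<parallel>\<close>.
\<close>

lemma sg_euler_step:
  assumes T: "substochastic_sg M T" and f: "integrable M f" and e: "integrable M e"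
    and \<delta>: "0 < \<delta>" and s: "0 \<le> s" and a: "0 \<le> a"
    and step: "AE x in M. T \<delta> f x \<le> a * f x + \<delta> * e x"
    and E: "AE x in M. T s f x - b * f x \<le> E x"
  shows "AE x in M. T (s + \<delta>) f x - a * b * f x \<le> a * E x + \<delta> * T s e x"
proof -
  have "AE x in M. T s (T \<delta> f) x \<le> T s (\<lambda>y. a * f y + \<delta> * e y) x"
    using step f e sg_integrable[OF T _ f, of \<delta>] \<delta> by (intro op_mono[OF sg_op[OF T s]]) auto
  with sg_add[OF T s less_imp_le[OF \<delta>] f] op_linear[OF sg_op[OF T s] f e, of a \<delta>] E
  show ?thesis
  proof eventually_elim
    case (elim x)
    then have "T (s + \<delta>) f x \<le> a * T s f x + \<delta> * T s e x" by simp
    also have "a * T s f x \<le> a * (b * f x + E x)"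
      using elim(3) a by (intro mult_left_mono) auto
    finally show ?case by (simp add: algebra_simps)
  qed
qed

lemma sg_euler_bound:
  assumes T: "substochastic_sg M T" and g: "has_gen M T f c"
    and cle: "AE x in M. c x \<le> \<mu> * f x" and \<mu>: "0 \<le> \<mu>" and \<delta>: "0 < \<delta>"
  defines "e \<equiv> (\<lambda>x. (T \<delta> f x - f x) / \<delta> - c x)" and "a \<equiv> 1 + \<mu> * \<delta>"
  shows "\<exists>E. integrable M E \<and> (AE x in M. T (real k * \<delta>) f x - a ^ k * f x \<le> E x)
      \<and> l1norm M E \<le> real k * \<delta> * a ^ k * l1norm M e"
proof (induction k)
  case 0
  have "AE x in M. T (real 0 * \<delta>) f x - a ^ 0 * f x \<le> 0"
    using sg_0[OF T has_genD(1)[OF T g]] by eventually_elim simp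
  then show ?case by (intro exI[of _ "\<lambda>x. 0"]) (simp add: l1norm_def)
next
  case (Suc k)
  note d = has_genD[OF T g]
  have a: "1 \<le> a" unfolding a_def using \<mu> \<delta> by simp
  have eI: "integrable M e" unfolding e_def using d sg_integrable[OF T _ d(1), of \<delta>] \<delta> by auto
  have step: "AE x in M. T \<delta> f x \<le> a * f x + \<delta> * e x"
    using cle unfolding a_def e_def by eventually_elim (use \<delta> in \<open>simp add: field_simps\<close>)
  from Suc obtain E where E: "integrable M E" "AE x in M. T (real k * \<delta>) f x - a ^ k * f x \<le> E x"
    "l1norm M E \<le> real k * \<delta> * a ^ k * l1norm M e" by blast
  define s where "s = real k * \<delta>"
  have s: "0 \<le> s" unfolding s_def using \<delta> by simp
  have TeI: "integrable M (T s e)" using sg_integrable[OF T s eI] .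
  have "AE x in M. T (real (Suc k) * \<delta>) f x - a ^ Suc k * f x \<le> a * E x + \<delta> * T s e x"
    using sg_euler_step[OF T d(1) eI \<delta> s _ step E(2)[folded s_def]] a
    unfolding s_def by (simp add: algebra_simps)
  moreover have "l1norm M (\<lambda>x. a * E x + \<delta> * T s e x) \<le> real (Suc k) * \<delta> * a ^ Suc k * l1norm M e"
  proof -
    have "l1norm M (\<lambda>x. a * E x + \<delta> * T s e x) \<le> a * l1norm M E + \<delta> * l1norm M (T s e)"
      using l1norm_add_le[of M "\<lambda>x. a * E x" "\<lambda>x. \<delta> * T s e x"] E(1) TeI a \<delta>
      by (simp add: l1norm_cmult)
    also have "\<dots> \<le> a * (real k * \<delta> * a ^ k * l1norm M e) + \<delta> * (a ^ Suc k * l1norm M e)"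
    proof (rule add_mono)
      show "a * l1norm M E \<le> a * (real k * \<delta> * a ^ k * l1norm M e)"
        using E(3) a by (intro mult_left_mono) auto
      have "l1norm M (T s e) \<le> 1 * l1norm M e" using sg_l1norm_le[OF T s eI] by simp
      also have "\<dots> \<le> a ^ Suc k * l1norm M e"
        using one_le_power[OF a] l1norm_nonneg by (rule mult_right_mono)
      finally show "\<delta> * l1norm M (T s e) \<le> \<delta> * (a ^ Suc k * l1norm M e)"
        using \<delta> by (intro mult_left_mono) auto
    qed
    also have "\<dots> = real (Suc k) * \<delta> * a ^ Suc k * l1norm M e" by (simp add: algebra_simps)
    finally show ?thesis .
  qed
  ultimately show ?case using E(1) TeI by (intro exI[of _ "\<lambda>x. a * E x + \<delta> * T s e x"]) auto
qed

lemma sg_exp_majorant: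
  assumes T: "substochastic_sg M T" and g: "has_gen M T f c" and fpos: "AE x in M. 0 \<le> f x"
    and cle: "AE x in M. c x \<le> \<mu> * f x" and \<mu>: "0 \<le> \<mu>" and t: "0 < t" and n: "0 < n"
  defines "\<delta> \<equiv> t / real n"
  obtains E where "integrable M E" "AE x in M. T t f x - exp (\<mu> * t) * f x \<le> E x"
    "l1norm M E \<le> t * exp (\<mu> * t) * l1norm M (\<lambda>x. (T \<delta> f x - f x) / \<delta> - c x)"
proof -
  have \<delta>: "0 < \<delta>" and nd: "real n * \<delta> = t" unfolding \<delta>_def using t n by auto
  define a where "a = 1 + \<mu> * \<delta>"
  obtain E where E: "integrable M E" "AE x in M. T t f x - a ^ n * f x \<le> E x"
    "l1norm M E \<le> t * a ^ n * l1norm M (\<lambda>x. (T \<delta> f x - f x) / \<delta> - c x)"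
    using sg_euler_bound[OF T g cle \<mu> \<delta>, of n] unfolding a_def nd by blast
  have "a ^ n \<le> exp (\<mu> * \<delta>) ^ n"
    unfolding a_def using \<mu> \<delta> by (intro power_mono exp_ge_add_one_self) auto
  also have "\<dots> = exp (\<mu> * t)" unfolding exp_of_nat_mult[symmetric] nd[symmetric] by (simp add: ac_simps)
  finally have an: "a ^ n \<le> exp (\<mu> * t)" .
  show ?thesis
  proof (rule that[OF E(1)])
    show "AE x in M. T t f x - exp (\<mu> * t) * f x \<le> E x"
      using E(2) fpos
    proof eventually_elim
      case (elim x)
      have "a ^ n * f x \<le> exp (\<mu> * t) * f x" using an elim(2) by (rule mult_right_mono)
      with elim(1) show ?case by simp
    qed
    show "l1norm M E \<le> t * exp (\<mu> * t) * l1norm M (\<lambda>x. (T \<delta> f x - f x) / \<delta> - c x)"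
      using E(3) an t by (elim order_trans) (intro mult_right_mono mult_left_mono l1norm_nonneg; simp)
  qed
qed

lemma sg_exp_bound:
  assumes T: "substochastic_sg M T" and g: "has_gen M T f c" and fpos: "AE x in M. 0 \<le> f x"
    and cle: "AE x in M. c x \<le> \<mu> * f x" and \<mu>: "0 \<le> \<mu>" and t: "0 \<le> t"
  shows "AE x in M. T t f x \<le> exp (\<mu> * t) * f x"
proof (cases "t = 0")
  case True
  show ?thesis unfolding True using sg_0[OF T has_genD(1)[OF T g]] by eventually_elim simp
next
  case False
  then have t: "0 < t" using t by simp
  note d = has_genD[OF T g]
  have "AE x in M. T t f x - exp (\<mu> * t) * f x \<le> 0"
  proof (rule AE_nonpos_if_small_majorants)
    show "integrable M (\<lambda>x. T t f x - exp (\<mu> * t) * f x)" using sg_integrable[OF T _ d(1)] t d(1) by auto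
    fix \<epsilon> :: real assume \<epsilon>: "\<epsilon> > 0"
    define C where "C = t * exp (\<mu> * t) + 1"
    have C: "0 < C" "t * exp (\<mu> * t) < C" unfolding C_def using t by (auto intro: add_pos_pos)
    obtain b where b: "b > 0"
      "\<And>h. 0 < h \<Longrightarrow> h < b \<Longrightarrow> l1norm M (\<lambda>x. (T h f x - f x) / h - c x) < \<epsilon> / C"
      using order_tendstoD(2)[OF d(3), of "\<epsilon> / C"] \<epsilon> C unfolding eventually_at_right_field by auto
    obtain n :: nat where n: "t / b < real n" using reals_Archimedean2 by blast
    moreover have "0 < t / b" using t b by simp
    ultimately have "0 < real n" by linarith
    with n have "0 < n" "t / real n < b" using b by (simp_all add: field_simps)
    then obtain E where E: "integrable M E" "AE x in M. T t f x - exp (\<mu> * t) * f x \<le> E x"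
      "l1norm M E \<le> t * exp (\<mu> * t) * l1norm M (\<lambda>x. (T (t / n) f x - f x) / (t / n) - c x)"
      using sg_exp_majorant[OF T g fpos cle \<mu> t] by blast
    have "l1norm M E \<le> t * exp (\<mu> * t) * (\<epsilon> / C)"
      using E(3) b(2)[of "t / n"] \<open>t / n < b\<close> \<open>0 < n\<close> t
      by (elim order_trans) (intro mult_left_mono; simp)
    also have "\<dots> < \<epsilon>" using C \<epsilon> by (simp add: field_simps)
    finally have "l1norm M E < \<epsilon>" .
    with E show "\<exists>w. integrable M w \<and> (AE x in M. T t f x - exp (\<mu> * t) * f x \<le> w x) \<and> l1norm M w < \<epsilon>"
      by (intro exI[of _ E]) auto
  qed
  then show ?thesis by eventually_elim simp
qed

section \<open>Subinvariance of monotone limits\<close>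

lemma min_tendsto_if_le_SUP:
  fixes a :: "nat \<Rightarrow> real"
  assumes inc: "incseq a" and a: "\<And>n. 0 \<le> a n" and q: "0 \<le> q"
    and le: "ennreal q \<le> (SUP n. ennreal (a n))"
  shows "(\<lambda>n. min q (a n)) \<longlonglongrightarrow> q"
proof -
  have "(\<lambda>n. ennreal (a n)) \<longlonglongrightarrow> (SUP n. ennreal (a n))"
    using inc by (intro LIMSEQ_SUP) (auto simp: incseq_def ennreal_leI)
  then have "(\<lambda>n. min (ennreal q) (ennreal (a n))) \<longlonglongrightarrow> min (ennreal q) (SUP n. ennreal (a n))"
    by (intro tendsto_min tendsto_const)
  then show ?thesis using le q a by (simp add: min_ennreal min_absorb1)
qed

lemma l1_lim_min_truncation:
  assumes f: "\<And>n. integrable M (f n)" "AE x in M. \<forall>n. 0 \<le> f n x \<and> f n x \<le> f (Suc n) x"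
    and Q: "integrable M Q" "AE x in M. 0 \<le> Q x" "AE x in M. ennreal (Q x) \<le> (SUP n. ennreal (f n x))"
  shows "l1_lim M (\<lambda>n x. min (Q x) (f n x)) Q sequentially"
proof (rule l1_limI[OF Q(1)])
  have "(\<lambda>n. LINT x|M. \<bar>min (Q x) (f n x) - Q x\<bar>) \<longlonglongrightarrow> (LINT x|M. 0)"
  proof (rule integral_dominated_convergence[where w="\<lambda>x. \<bar>Q x\<bar>"])
    show "AE x in M. (\<lambda>n. \<bar>min (Q x) (f n x) - Q x\<bar>) \<longlonglongrightarrow> 0"
      using f(2) Q(2,3)
    proof eventually_elim
      case (elim x)
      then have "(\<lambda>n. min (Q x) (f n x)) \<longlonglongrightarrow> Q x"
        by (intro min_tendsto_if_le_SUP) (auto simp: incseq_Suc_iff)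
      then show ?case using tendsto_rabs[OF LIM_zero] by fastforce
    qed
    show "AE x in M. norm \<bar>min (Q x) (f n x) - Q x\<bar> \<le> \<bar>Q x\<bar>" for n
      using f(2) Q(2) by eventually_elim (auto simp: min_def)
  qed (use f(1) Q(1) in auto)
  then show "(\<lambda>n. l1norm M (\<lambda>x. min (Q x) (f n x) - Q x)) \<longlonglongrightarrow> 0" unfolding l1norm_def by simp
qed (use f(1) Q(1) in simp)

text \<open>
  If \<open>T f\<^sub>n \<le> c\<^sub>n f\<^sub>n\<close> for an increasing sequence \<open>f\<^sub>n\<close> and \<open>c\<^sub>n \<rightarrow> 1\<close>, then \<open>T\<close> maps every integrable
  \<open>0 \<le> Q \<le> sup\<^sub>n f\<^sub>n\<close> below \<open>sup\<^sub>n f\<^sub>n\<close>: approximate \<open>Q\<close> in \<open>L\<^sup>1\<close> by \<open>min Q f\<^sub>n\<close> and pass to an a.e.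
  convergent subsequence.
\<close>

lemma op_le_SUP_if_almost_subinvariant:
  assumes T: "substochastic_op M T"
    and f: "\<And>n. integrable M (f n)" "AE x in M. \<forall>n. 0 \<le> f n x \<and> f n x \<le> f (Suc n) x"
    and sub: "\<And>n. AE x in M. T (f n) x \<le> c n * f n x" and c: "c \<longlonglongrightarrow> 1" "\<And>n. 0 \<le> c n"
    and Q: "integrable M Q" "AE x in M. 0 \<le> Q x" "AE x in M. ennreal (Q x) \<le> (SUP n. ennreal (f n x))"
  shows "AE x in M. ennreal (T Q x) \<le> (SUP n. ennreal (f n x))"
proof -
  define h where "h n x = min (Q x) (f n x)" for n x
  have hI: "integrable M (h n)" for n unfolding h_def using Q f by auto
  have "l1_lim M h Q sequentially" unfolding h_def by (rule l1_lim_min_truncation[OF f Q])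
  then have "l1_lim M (\<lambda>n. T (h n)) (T Q) sequentially" by (rule op_l1_lim[OF T])
  then obtain r where r: "strict_mono r" "AE x in M. (\<lambda>n. T (h (r n)) x) \<longlonglongrightarrow> T Q x"
    using l1_lim_AE_subseq op_integrable[OF T hI] by blast
  have "AE x in M. \<forall>n. T (h n) x \<le> c n * f n x"
  proof (subst AE_all_countable, intro allI)
    fix n
    have "AE x in M. T (h n) x \<le> T (f n) x"
      using f(2) by (intro op_mono[OF T hI f(1)]) (auto simp: h_def elim!: eventually_mono)
    with sub[of n] show "AE x in M. T (h n) x \<le> c n * f n x" by eventually_elim simp
  qed
  with r(2) f(2) show ?thesis
  proof eventually_elim
    case (elim x)
    show ?case
    proof (cases "(SUP n. ennreal (f n x)) = \<infinity>")
      case False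
      define b where "b = enn2real (SUP n. ennreal (f n x))"
      have b: "(SUP n. ennreal (f n x)) = ennreal b" "0 \<le> b"
        unfolding b_def using False by (cases "SUP n. ennreal (f n x)" rule: ennreal_cases) auto
      have fb: "f n x \<le> b" for n
        using SUP_upper[of n UNIV "\<lambda>n. ennreal (f n x)"] b by simp
      have "T (h (r n)) x \<le> c (r n) * b" for n
      proof -
        have "T (h (r n)) x \<le> c (r n) * f (r n) x" using elim(3) by blast
        also have "\<dots> \<le> c (r n) * b" using fb c(2) by (rule mult_left_mono)
        finally show ?thesis .
      qed
      moreover have "(\<lambda>n. c (r n) * b) \<longlonglongrightarrow> 1 * b"
        using LIMSEQ_subseq_LIMSEQ[OF c(1) r(1)] by (intro tendsto_intros) (simp add: comp_def)
      ultimately have "T Q x \<le> 1 * b" by (intro LIMSEQ_le[OF elim(1)]) auto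
      then show ?thesis using b by simp
    qed (simp only: infinity_ennreal_def top_greatest)
  qed
qed

lemma SUP_truncation_eq:
  fixes y :: ennreal
  assumes A: "incseq A" "x \<in> A N"
  shows "(SUP n. ennreal (indicator (A n) x * enn2real (min (of_nat n) y))) = y"
proof (rule antisym)
  have fin: "min (of_nat n) y < top" for n
    using min.cobounded1[of "of_nat n" y] of_nat_less_top[of n] by (rule le_less_trans)
  show "(SUP n. ennreal (indicator (A n) x * enn2real (min (of_nat n) y))) \<le> y"
  proof (rule SUP_least)
    fix n
    have "ennreal (indicator (A n) x * enn2real (min (of_nat n) y)) \<le> ennreal (enn2real (min (of_nat n) y))"
      by (intro ennreal_leI) (auto simp: indicator_def)
    also have "\<dots> \<le> y" using fin by simp
    finally show "ennreal (indicator (A n) x * enn2real (min (of_nat n) y)) \<le> y" .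
  qed
  show "y \<le> (SUP n. ennreal (indicator (A n) x * enn2real (min (of_nat n) y)))"
  proof (subst le_SUP_iff, intro allI impI)
    fix z assume z: "z < y"
    then have "z < top" using top.not_eq_extremum by fastforce
    then obtain m where m: "z < of_nat m" using ennreal_Ex_less_of_nat by blast
    define n where "n = max m N"
    have "x \<in> A n" using A monoD[OF A(1), of N n] unfolding n_def by auto
    moreover have "z < of_nat n" using m unfolding n_def by (rule less_le_trans) simp
    ultimately have "z < ennreal (indicator (A n) x * enn2real (min (of_nat n) y))"
      using z fin[of n] by simp
    then show "\<exists>i\<in>UNIV. z < ennreal (indicator (A i) x * enn2real (min (of_nat i) y))" by blast
  qed
qed

lemma approx_seq_exists:
  assumes "sigma_finite_measure M" and f: "f \<in> borel_measurable M"
  obtains fn where "approx_seq M f fn"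
proof -
  interpret sigma_finite_measure M by fact
  obtain A :: "nat \<Rightarrow> 'a set" where A: "range A \<subseteq> sets M" "(\<Union>i. A i) = space M"
    "\<And>i. emeasure M (A i) \<noteq> \<infinity>" "incseq A"
    using sigma_finite_incseq by blast
  define fn where "fn n x = indicator (A n) x * enn2real (min (of_nat n) (f x))" for n x
  have AS: "A n \<in> sets M" for n using A(1) by auto
  have integrable: "integrable M (fn n)" for n
  proof (rule Bochner_Integration.integrable_bound[of _ "\<lambda>x. real n * indicator (A n) x"])
    show "integrable M (\<lambda>x. real n * indicator (A n) x :: real)"
      using AS A(3) by (intro integrable_mult_right integrable_real_indicator) (auto simp: less_top)
    show "fn n \<in> borel_measurable M" unfolding fn_def using AS f by measurable
    have "enn2real (min (of_nat n) (f x)) \<le> real n" for x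
      by (rule enn2real_leI) (auto simp: min.coboundedI1)
    then show "AE x in M. norm (fn n x) \<le> norm (real n * indicator (A n) x :: real)"
      by (intro AE_I2) (auto simp: fn_def indicator_def)
  qed
  have mono: "fn n x \<le> fn (Suc n) x" for n x
  proof -
    have "indicator (A n) x \<le> (indicator (A (Suc n)) x :: real)"
      using A(4) by (auto simp: indicator_def incseq_Suc_iff)
    moreover have "enn2real (min (of_nat n) (f x)) \<le> enn2real (min (of_nat (Suc n)) (f x))"
    proof (rule enn2real_mono)
      show "min (of_nat n) (f x) \<le> min (of_nat (Suc n)) (f x)" by (intro min.mono of_nat_mono) auto
      show "min (of_nat (Suc n)) (f x) < top"
        using min.cobounded1 of_nat_less_top by (rule le_less_trans)
    qed
    ultimately show ?thesis unfolding fn_def by (intro mult_mono) auto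
  qed
  have "(SUP n. ennreal (fn n x)) = f x" if "x \<in> space M" for x
  proof -
    have "x \<in> (\<Union>i. A i)" using that A(2) by simp
    then obtain N where "x \<in> A N" by blast
    then show ?thesis unfolding fn_def by (rule SUP_truncation_eq[OF A(4)])
  qed
  moreover have "0 \<le> fn n x" for n x unfolding fn_def by simp
  ultimately have "approx_seq M f fn"
    unfolding approx_seq_def using integrable mono by (auto intro!: AE_I2)
  then show ?thesis by (rule that)
qed

lemma ext_op_le_SUP_if_almost_subinvariant:
  assumes M: "sigma_finite_measure M" and T: "substochastic_op M T"
    and f: "\<And>n. integrable M (f n)" "AE x in M. \<forall>n. 0 \<le> f n x \<and> f n x \<le> f (Suc n) x"
    and sub: "\<And>n. AE x in M. T (f n) x \<le> c n * f n x" and c: "c \<longlonglongrightarrow> 1" "\<And>n. 0 \<le> c n"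
  defines "F \<equiv> \<lambda>x. SUP n. ennreal (f n x)"
  shows "AE x in M. ext_op M T F x \<le> F x"
proof -
  have "F \<in> borel_measurable M" unfolding F_def using f(1) by measurable
  obtain fn' where "approx_seq M F fn'" using approx_seq_exists[OF M \<open>F \<in> borel_measurable M\<close>] .
  define fn where "fn = (SOME fn. approx_seq M F fn)"
  have ap: "approx_seq M F fn" unfolding fn_def by (rule someI[of _ fn']) fact
  then have fnI: "integrable M (fn n)" and fn0: "AE x in M. 0 \<le> fn n x" for n
    unfolding approx_seq_def by (auto intro!: AE_I2)
  have "AE x in M. (SUP n. ennreal (fn n x)) = F x" using ap unfolding approx_seq_def by blast
  then have fnF: "AE x in M. ennreal (fn n x) \<le> F x" for n
    by eventually_elim (metis SUP_upper UNIV_I)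
  have "AE x in M. \<forall>n. ennreal (T (fn n) x) \<le> F x"
    unfolding AE_all_countable F_def
    using op_le_SUP_if_almost_subinvariant[OF T f sub c fnI fn0] fnF unfolding F_def by blast
  then show ?thesis
    unfolding ext_op_def fn_def[symmetric] by eventually_elim (rule SUP_least, blast)
qed

lemma stochastic_op_subinvariant_density_invariant:
  assumes T: "stochastic_op M T" and g: "is_density M g" and sub: "AE x in M. T g x \<le> g x"
  shows "AE x in M. T g x = g x"
proof -
  have Tg: "is_density M (T g)" using T g unfolding stochastic_op_def by blast
  have "integral\<^sup>L M (\<lambda>x. g x - T g x) = 0"
    using g Tg unfolding is_density_def by simp
  moreover have "AE x in M. 0 \<le> g x - T g x" using sub by eventually_elim simp
  ultimately have "AE x in M. g x - T g x = 0"
    using integral_nonneg_eq_0_iff_AE[of M "\<lambda>x. g x - T g x"] g Tg unfolding is_density_def by simp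
  then show ?thesis by eventually_elim simp
qed

lemma is_density_normalize:
  assumes "integrable M G" "\<And>x. 0 \<le> G x" "integral\<^sup>L M G \<noteq> 0"
  shows "is_density M (\<lambda>x. G x / integral\<^sup>L M G)"
proof -
  have "0 \<le> integral\<^sup>L M G" using assms(2) by (simp add: integral_nonneg)
  then show ?thesis using assms unfolding is_density_def by auto
qed

lemma l1_lim_Suc_diff_tendsto_0:
  assumes "l1_lim M q L sequentially" "\<And>n. integrable M (q n)"
  shows "(\<lambda>n. l1norm M (\<lambda>x. q (Suc n) x - q n x)) \<longlonglongrightarrow> 0"
proof (rule Lim_null_comparison)
  note lim = l1_limD(3)[OF assms(1)] and L = l1_limD(1)[OF assms(1)]
  show "(\<lambda>n. l1norm M (\<lambda>x. q (Suc n) x - L x) + l1norm M (\<lambda>x. q n x - L x)) \<longlonglongrightarrow> 0"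
    using tendsto_add[OF LIMSEQ_Suc[OF lim] lim] by simp
  have "norm (l1norm M (\<lambda>x. q (Suc n) x - q n x))
      \<le> l1norm M (\<lambda>x. q (Suc n) x - L x) + l1norm M (\<lambda>x. q n x - L x)" for n
    using l1norm_diff_triangle[OF assms(2) L assms(2), of "Suc n" n]
      l1norm_minus_commute[of M L "q n"] l1norm_nonneg[of M "\<lambda>x. q (Suc n) x - q n x"]
    by simp
  then show "\<forall>\<^sub>F n in sequentially. norm (l1norm M (\<lambda>x. q (Suc n) x - q n x))
      \<le> l1norm M (\<lambda>x. q (Suc n) x - L x) + l1norm M (\<lambda>x. q n x - L x)"
    by simp
qed

section \<open>The minimal semigroup\<close>

locale minimal_semigroup =
  fixes M :: "'a measure"
    and P :: "('a \<Rightarrow> real) \<Rightarrow> ('a \<Rightarrow> real)"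
    and \<phi> :: "'a \<Rightarrow> real"
    and S Pt :: "real \<Rightarrow> ('a \<Rightarrow> real) \<Rightarrow> ('a \<Rightarrow> real)"
  assumes M_sigma_finite: "sigma_finite_measure M"
    and P_op: "substochastic_op M P"
    and phi_meas: "\<phi> \<in> borel_measurable M"
    and phi_nonneg: "\<forall>x\<in>space M. 0 \<le> \<phi> x"
    and S_sg: "substochastic_sg M S"
    and A_dom: "\<forall>f g. has_gen M S f g \<longrightarrow> integrable M (\<lambda>x. \<phi> x * \<bar>f x\<bar>)"
    and Pt_sg: "substochastic_sg M Pt"
    and Pt_min: "\<forall>l>0. \<forall>f. integrable M f \<longrightarrow>
        l1_lim M (\<lambda>n. resolvent M S l
                    (\<lambda>x. \<Sum>k\<le>n. (((\<lambda>u. P (\<lambda>y. \<phi> y * resolvent M S l u y)) ^^ k) f) x))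
               (resolvent M Pt l f) sequentially"
begin

abbreviation R :: "real \<Rightarrow> ('a \<Rightarrow> real) \<Rightarrow> ('a \<Rightarrow> real)" where "R l \<equiv> resolvent M S l"

definition jump_op :: "real \<Rightarrow> ('a \<Rightarrow> real) \<Rightarrow> ('a \<Rightarrow> real)" where
  "jump_op l u = P (\<lambda>y. \<phi> y * R l u y)"

lemma phi_AE_nonneg: "AE x in M. 0 \<le> \<phi> x"
  using phi_nonneg by (intro AE_I2) auto

lemma phi_resolvent_integrable:
  assumes l: "l > 0" and u: "integrable M u"
  shows "integrable M (\<lambda>y. \<phi> y * R l u y)"
proof (rule Bochner_Integration.integrable_bound)
  show "integrable M (\<lambda>x. \<phi> x * \<bar>R l u x\<bar>)"
    using A_dom[rule_format, OF has_gen_resolvent[OF S_sg l u]] .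
  show "(\<lambda>y. \<phi> y * R l u y) \<in> borel_measurable M"
    using phi_meas integrable_resolvent[OF S_sg l u] by auto
  show "AE x in M. norm (\<phi> x * R l u x) \<le> norm (\<phi> x * \<bar>R l u x\<bar>)"
    using phi_AE_nonneg by eventually_elim (auto simp: abs_mult)
qed

lemma jump_op_integrable: "l > 0 \<Longrightarrow> integrable M u \<Longrightarrow> integrable M (jump_op l u)"
  unfolding jump_op_def by (rule op_integrable[OF P_op phi_resolvent_integrable])

lemma jump_op_power_integrable: "l > 0 \<Longrightarrow> integrable M u \<Longrightarrow> integrable M ((jump_op l ^^ k) u)"
  by (induction k) (auto intro: jump_op_integrable)

lemma jump_op_AE_cong:
  assumes l: "l > 0" and u: "integrable M u" "integrable M v" and eq: "AE x in M. u x = v x"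
  shows "AE x in M. jump_op l u x = jump_op l v x"
proof -
  have "AE x in M. \<phi> x * R l u x = \<phi> x * R l v x"
    using resolvent_AE_cong[OF S_sg l u eq] by eventually_elim simp
  then show ?thesis unfolding jump_op_def by (rule op_AE_cong[OF P_op phi_resolvent_integrable[OF l u(1)]])
qed

lemma jump_op_diff:
  assumes l: "l > 0" and u: "integrable M u" and v: "integrable M v"
  shows "AE x in M. jump_op l (\<lambda>y. u y - v y) x = jump_op l u x - jump_op l v x"
proof -
  have "AE x in M. R l (\<lambda>y. 1 * u y + (-1) * v y) x = 1 * R l u x + (-1) * R l v x"
    by (rule resolvent_linear[OF S_sg l u v])
  then have "AE x in M. \<phi> x * R l (\<lambda>y. u y - v y) x = \<phi> x * R l u x - \<phi> x * R l v x"
    by eventually_elim (simp add: right_diff_distrib)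
  then have "AE x in M. jump_op l (\<lambda>y. u y - v y) x = P (\<lambda>y. \<phi> y * R l u y - \<phi> y * R l v y) x"
    using u v unfolding jump_op_def by (intro op_AE_cong[OF P_op phi_resolvent_integrable[OF l]]) auto
  moreover have "AE x in M. P (\<lambda>y. \<phi> y * R l u y - \<phi> y * R l v y) x = jump_op l u x - jump_op l v x"
    unfolding jump_op_def
    by (rule op_diff[OF P_op phi_resolvent_integrable[OF l u] phi_resolvent_integrable[OF l v]])
  ultimately show ?thesis by eventually_elim simp
qed

lemma resolvent_minimal_series:
  assumes "l > 0" "integrable M f"
  shows "l1_lim M (\<lambda>n. R l (\<lambda>x. \<Sum>k\<le>n. (jump_op l ^^ k) f x)) (resolvent M Pt l f) sequentially"
proof -
  have "jump_op l = (\<lambda>u. P (\<lambda>y. \<phi> y * R l u y))" by (rule ext) (simp add: jump_op_def)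
  then show ?thesis using Pt_min[rule_format, OF assms] by simp
qed

context
  fixes l :: real and f :: "'a \<Rightarrow> real"
  assumes l: "l > 0" and f: "integrable M f"
begin

lemma jump_op_power_defect:
  "AE x in M. (jump_op l ^^ k) (\<lambda>y. f y - jump_op l f y) x = (jump_op l ^^ k) f x - (jump_op l ^^ Suc k) f x"
proof (induction k)
  case (Suc k)
  have I: "integrable M ((jump_op l ^^ k) f)" "integrable M ((jump_op l ^^ Suc k) f)"
    using jump_op_power_integrable[OF l f] by blast+
  have "integrable M (\<lambda>y. f y - jump_op l f y)" using f jump_op_integrable[OF l f] by auto
  from jump_op_AE_cong[OF l jump_op_power_integrable[OF l this] _ Suc.IH] I
  have "AE x in M. (jump_op l ^^ Suc k) (\<lambda>y. f y - jump_op l f y) x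
      = jump_op l (\<lambda>y. (jump_op l ^^ k) f y - (jump_op l ^^ Suc k) f y) x"
    by simp
  with jump_op_diff[OF l I] show ?case by eventually_elim simp
qed simp

lemma jump_op_series_defect:
  "AE x in M. (\<Sum>k\<le>n. (jump_op l ^^ k) (\<lambda>y. f y - jump_op l f y) x) = f x - (jump_op l ^^ Suc n) f x"
proof -
  have "AE x in M. \<forall>k\<in>{..n}. (jump_op l ^^ k) (\<lambda>y. f y - jump_op l f y) x
      = (jump_op l ^^ k) f x - (jump_op l ^^ Suc k) f x"
    using jump_op_power_defect by (intro eventually_ball_finite) auto
  then show ?thesis
  proof eventually_elim
    case (elim x)
    then have "(\<Sum>k\<le>n. (jump_op l ^^ k) (\<lambda>y. f y - jump_op l f y) x)
        = (\<Sum>k\<le>n. (jump_op l ^^ k) f x - (jump_op l ^^ Suc k) f x)"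
      by (intro sum.cong) auto
    also have "\<dots> = f x - (jump_op l ^^ Suc n) f x"
      using sum_telescope[of "\<lambda>k. (jump_op l ^^ k) f x" n] by simp
    finally show ?case .
  qed
qed

lemma resolvent_jump_power_tendsto_0:
  "(\<lambda>n. l1norm M (R l ((jump_op l ^^ Suc n) f))) \<longlonglongrightarrow> 0"
proof -
  define q where "q n = R l (\<lambda>x. \<Sum>k\<le>n. (jump_op l ^^ k) f x)" for n
  have sI: "integrable M (\<lambda>x. \<Sum>k\<le>n. (jump_op l ^^ k) f x)" for n
    using jump_op_power_integrable[OF l f] by auto
  have qI: "integrable M (q n)" for n unfolding q_def by (rule integrable_resolvent[OF S_sg l sI])
  have diff: "AE x in M. q (Suc n) x - q n x = R l ((jump_op l ^^ Suc n) f) x" for n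
  proof -
    have "AE x in M. R l (\<lambda>y. 1 * (\<Sum>k\<le>n. (jump_op l ^^ k) f y) + 1 * (jump_op l ^^ Suc n) f y) x
       = 1 * q n x + 1 * R l ((jump_op l ^^ Suc n) f) x"
      unfolding q_def by (rule resolvent_linear[OF S_sg l sI jump_op_power_integrable[OF l f]])
    moreover have "(\<lambda>y. 1 * (\<Sum>k\<le>n. (jump_op l ^^ k) f y) + 1 * (jump_op l ^^ Suc n) f y)
        = (\<lambda>y. \<Sum>k\<le>Suc n. (jump_op l ^^ k) f y)"
      by (simp add: add.commute)
    ultimately show ?thesis unfolding q_def by (auto elim!: eventually_mono)
  qed
  have "l1norm M (R l ((jump_op l ^^ Suc n) f)) = l1norm M (\<lambda>x. q (Suc n) x - q n x)" for n
    using diff[of n] qI integrable_resolvent[OF S_sg l jump_op_power_integrable[OF l f, of "Suc n"]]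
    by (intro l1norm_cong_AE) (auto elim!: eventually_mono)
  moreover have "l1_lim M q (resolvent M Pt l f) sequentially"
    unfolding q_def by (rule resolvent_minimal_series[OF l f])
  ultimately show ?thesis using l1_lim_Suc_diff_tendsto_0[OF _ qI] by simp
qed

lemma minimal_resolvent_defect:
  "AE x in M. resolvent M Pt l (\<lambda>y. f y - jump_op l f y) x = R l f x"
proof -
  define w where "w y = f y - jump_op l f y" for y
  have wI: "integrable M w" unfolding w_def using f jump_op_integrable[OF l f] by auto
  define s where "s n = R l (\<lambda>x. \<Sum>k\<le>n. (jump_op l ^^ k) w x)" for n
  have sI: "integrable M (\<lambda>x. \<Sum>k\<le>n. (jump_op l ^^ k) w x)" for n
    using jump_op_power_integrable[OF l wI] by auto
  have RfI: "integrable M (R l f)" by (rule integrable_resolvent[OF S_sg l f])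
  have RbI: "integrable M (R l ((jump_op l ^^ Suc n) f))" for n
    by (rule integrable_resolvent[OF S_sg l jump_op_power_integrable[OF l f]])
  have seq: "AE x in M. s n x = R l f x - R l ((jump_op l ^^ Suc n) f) x" for n
  proof -
    have "integrable M (\<lambda>y. 1 * f y + (-1) * (jump_op l ^^ Suc n) f y)"
      using f jump_op_power_integrable[OF l f, of "Suc n"] by auto
    with jump_op_series_defect[of n]
    have "AE x in M. s n x = R l (\<lambda>y. 1 * f y + (-1) * (jump_op l ^^ Suc n) f y) x"
      unfolding s_def w_def
      by (intro resolvent_AE_cong[OF S_sg l sI[unfolded w_def]]) (auto elim!: eventually_mono)
    with resolvent_linear[OF S_sg l f jump_op_power_integrable[OF l f, of "Suc n"], where a=1 and b="-1"]
    show ?thesis by eventually_elim simp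
  qed
  have "l1_lim M s (R l f) sequentially"
  proof (rule l1_limI[OF RfI])
    show "\<forall>\<^sub>F n in sequentially. integrable M (s n)"
      unfolding s_def using integrable_resolvent[OF S_sg l sI] by simp
    have "l1norm M (\<lambda>x. s n x - R l f x) = l1norm M (\<lambda>x. - R l ((jump_op l ^^ Suc n) f) x)" for n
      using seq[of n] integrable_resolvent[OF S_sg l sI] RfI RbI unfolding s_def
      by (intro l1norm_cong_AE) (auto elim!: eventually_mono)
    then show "(\<lambda>n. l1norm M (\<lambda>x. s n x - R l f x)) \<longlonglongrightarrow> 0"
      using resolvent_jump_power_tendsto_0 by (simp add: l1norm_uminus)
  qed
  moreover have "l1_lim M s (resolvent M Pt l w) sequentially"
    unfolding s_def by (rule resolvent_minimal_series[OF l wI])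
  ultimately show ?thesis unfolding w_def by (intro l1_lim_unique) auto
qed

lemma minimal_has_gen: "has_gen M Pt (R l f) (\<lambda>x. l * R l f x - (f x - jump_op l f x))"
proof -
  have wI: "integrable M (\<lambda>y. f y - jump_op l f y)" using f jump_op_integrable[OF l f] by auto
  show ?thesis
    using minimal_resolvent_defect integrable_resolvent[OF S_sg l f] wI
    by (intro has_gen_cong_AE[OF Pt_sg has_gen_resolvent[OF Pt_sg l wI]]) (auto elim!: eventually_mono)
qed

lemma minimal_sg_exp_bound:
  assumes "AE x in M. 0 \<le> f x" "AE x in M. jump_op l f x \<le> f x" "0 \<le> t"
  shows "AE x in M. Pt t (R l f) x \<le> exp (l * t) * R l f x"
  using assms l
  by (intro sg_exp_bound[OF Pt_sg minimal_has_gen resolvent_nonneg[OF S_sg l f]])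
     (auto elim!: eventually_mono)

end

end

section \<open>Subinvariance of the resolvent supremum\<close>

context minimal_semigroup
begin

context
  fixes K :: "('a \<Rightarrow> real) \<Rightarrow> ('a \<Rightarrow> real)" and fstar :: "'a \<Rightarrow> real"
  assumes K_def: "\<forall>f. integrable M f \<longrightarrow> l1_lim M (\<lambda>l. jump_op l f) (K f) (at_right 0)"
    and fstar_dens: "is_density M fstar"
    and fstar_sub: "AE x in M. K fstar x \<le> fstar x"
begin

lemma fstar_integrable: "integrable M fstar" and fstar_nonneg: "AE x in M. 0 \<le> fstar x"
  using fstar_dens unfolding is_density_def by auto

text \<open>\<open>jump_op l f\<^sub>*\<close> increases to \<open>K f\<^sub>*\<close> as \<open>l \<down> 0\<close>, because \<open>R(l,A)\<close> is antitone in \<open>l\<close>.\<close>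

lemma jump_op_fstar_le: assumes l: "l > 0" shows "AE x in M. jump_op l fstar x \<le> fstar x"
proof -
  have "\<forall>\<^sub>F m in at_right 0. AE x in M. jump_op l fstar x \<le> jump_op m fstar x"
  proof -
    have "\<forall>\<^sub>F m in at_right 0. 0 < m \<and> m < l"
      using l by (simp add: eventually_at_right_field) (metis dense)
    then show ?thesis
    proof eventually_elim
      case (elim m)
      then have "AE x in M. R l fstar x \<le> R m fstar x"
        by (intro resolvent_antimono[OF S_sg _ _ fstar_integrable fstar_nonneg]) auto
      then have "AE x in M. \<phi> x * R l fstar x \<le> \<phi> x * R m fstar x"
        using phi_AE_nonneg by eventually_elim (auto intro: mult_left_mono)
      then show ?case unfolding jump_op_def using elim l fstar_integrable
        by (intro op_mono[OF P_op phi_resolvent_integrable phi_resolvent_integrable]) auto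
    qed
  qed
  then have "AE x in M. jump_op l fstar x \<le> K fstar x"
    using K_def fstar_integrable jump_op_integrable[OF l fstar_integrable]
    by (intro l1_lim_AE_ge_const[of "at_right 0"]) auto
  with fstar_sub show ?thesis by eventually_elim simp
qed

definition resolvent_seq :: "nat \<Rightarrow> 'a \<Rightarrow> real" where
  "resolvent_seq n = R (1 / real (Suc n)) fstar"

lemma resolvent_sup_eq: "resolvent_sup M S fstar = (\<lambda>x. SUP n. ennreal (resolvent_seq n x))"
  unfolding resolvent_sup_def resolvent_seq_def by simp

lemma resolvent_seq_integrable: "integrable M (resolvent_seq n)"
  unfolding resolvent_seq_def by (rule integrable_resolvent[OF S_sg _ fstar_integrable]) simp

lemma resolvent_seq_mono: "AE x in M. \<forall>n. 0 \<le> resolvent_seq n x \<and> resolvent_seq n x \<le> resolvent_seq (Suc n) x"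
proof -
  have "AE x in M. 0 \<le> resolvent_seq n x" for n
    unfolding resolvent_seq_def by (rule resolvent_nonneg[OF S_sg _ fstar_integrable fstar_nonneg]) simp
  moreover have "AE x in M. resolvent_seq n x \<le> resolvent_seq (Suc n) x" for n
    unfolding resolvent_seq_def
    by (rule resolvent_antimono[OF S_sg _ _ fstar_integrable fstar_nonneg]) (simp_all add: frac_less2)
  ultimately show ?thesis by (simp add: AE_all_countable)
qed

lemma resolvent_seq_exp_bound:
  assumes "0 \<le> t"
  shows "AE x in M. Pt t (resolvent_seq n) x \<le> exp (t / real (Suc n)) * resolvent_seq n x"
  using minimal_sg_exp_bound[OF _ fstar_integrable fstar_nonneg jump_op_fstar_le assms, of "1 / real (Suc n)"]
  unfolding resolvent_seq_def by simp

lemma resolvent_sup_subinvariant: "subinvariant_sg M Pt (resolvent_sup M S fstar)"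
  unfolding subinvariant_sg_def resolvent_sup_eq
proof (intro allI impI)
  fix t :: real assume t: "0 \<le> t"
  have "(\<lambda>n. exp (t / real (Suc n))) \<longlonglongrightarrow> exp 0"
    by (intro tendsto_intros LIMSEQ_Suc[OF lim_const_over_n])
  then show "AE x in M. ext_op M (Pt t) (\<lambda>x. SUP n. ennreal (resolvent_seq n x)) x
      \<le> (SUP n. ennreal (resolvent_seq n x))"
    using resolvent_seq_integrable resolvent_seq_mono resolvent_seq_exp_bound[OF t]
    by (intro ext_op_le_SUP_if_almost_subinvariant[OF M_sigma_finite sg_op[OF Pt_sg t]]) auto
qed

lemma resolvent_sup_measurable: "resolvent_sup M S fstar \<in> borel_measurable M"
  unfolding resolvent_sup_eq using resolvent_seq_integrable by measurable

lemma Pt_le_resolvent_sup: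
  assumes "0 \<le> t" "integrable M Q" "AE x in M. 0 \<le> Q x" "AE x in M. ennreal (Q x) \<le> resolvent_sup M S fstar x"
  shows "AE x in M. ennreal (Pt t Q x) \<le> resolvent_sup M S fstar x"
proof -
  have "(\<lambda>n. exp (t / real (Suc n))) \<longlonglongrightarrow> exp 0"
    by (intro tendsto_intros LIMSEQ_Suc[OF lim_const_over_n])
  then show ?thesis
    using assms resolvent_seq_integrable resolvent_seq_mono resolvent_seq_exp_bound[OF assms(1)]
    unfolding resolvent_sup_eq
    by (intro op_le_SUP_if_almost_subinvariant[OF sg_op[OF Pt_sg assms(1)],
          where c="\<lambda>n. exp (t / real (Suc n))"]) auto
qed

context
  assumes finite: "(\<integral>\<^sup>+ x. resolvent_sup M S fstar x \<partial>M) < \<infinity>"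
begin

definition resolvent_sup_real :: "'a \<Rightarrow> real" where
  "resolvent_sup_real x = enn2real (resolvent_sup M S fstar x)"

lemma resolvent_sup_real_nonneg: "0 \<le> resolvent_sup_real x"
  unfolding resolvent_sup_real_def by simp

lemma resolvent_sup_real_AE_eq: "AE x in M. ennreal (resolvent_sup_real x) = resolvent_sup M S fstar x"
  using finite_nn_integral_imp_ae_finite[OF resolvent_sup_measurable finite]
  unfolding resolvent_sup_real_def by eventually_elim simp

lemma resolvent_sup_real_integrable: "integrable M resolvent_sup_real"
proof (subst integrable_iff_bounded, intro conjI)
  show "resolvent_sup_real \<in> borel_measurable M"
    unfolding resolvent_sup_real_def using resolvent_sup_measurable by measurable
  have "(\<integral>\<^sup>+ x. ennreal (norm (resolvent_sup_real x)) \<partial>M) \<le> (\<integral>\<^sup>+ x. resolvent_sup M S fstar x \<partial>M)"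
    unfolding resolvent_sup_real_def
    by (intro nn_integral_mono) (simp add: ennreal_enn2real_if)
  then show "(\<integral>\<^sup>+ x. ennreal (norm (resolvent_sup_real x)) \<partial>M) < \<infinity>"
    using finite by (rule le_less_trans)
qed

lemma resolvent_sup_real_subinvariant:
  assumes "0 \<le> t" shows "AE x in M. Pt t resolvent_sup_real x \<le> resolvent_sup_real x"
proof -
  have "AE x in M. ennreal (Pt t resolvent_sup_real x) \<le> resolvent_sup M S fstar x"
    using resolvent_sup_real_AE_eq resolvent_sup_real_nonneg
    by (intro Pt_le_resolvent_sup[OF assms resolvent_sup_real_integrable]) (auto elim!: eventually_mono)
  with resolvent_sup_real_AE_eq show ?thesis
  proof eventually_elim
    case (elim x)
    then have "ennreal (Pt t resolvent_sup_real x) \<le> ennreal (resolvent_sup_real x)" by simp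
    then show ?case using resolvent_sup_real_nonneg[of x] by simp
  qed
qed

text \<open>If the supremum vanished, so would \<open>R(1,A) f\<^sub>*\<close> and hence \<open>f\<^sub>*\<close>.\<close>

lemma resolvent_sup_real_integral_nonzero: "integral\<^sup>L M resolvent_sup_real \<noteq> 0"
proof
  assume "integral\<^sup>L M resolvent_sup_real = 0"
  then have "AE x in M. resolvent_sup_real x = 0"
    using resolvent_sup_real_integrable resolvent_sup_real_nonneg
      integral_nonneg_eq_0_iff_AE[of M resolvent_sup_real] by simp
  with resolvent_sup_real_AE_eq resolvent_seq_mono
  have "AE x in M. resolvent_seq 0 x = 0"
  proof eventually_elim
    case (elim x)
    have "ennreal (resolvent_seq 0 x) \<le> resolvent_sup M S fstar x"
      unfolding resolvent_sup_eq by (rule SUP_upper) simp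
    then show ?case using elim by (simp add: order_antisym)
  qed
  then have "AE x in M. fstar x = 0"
    unfolding resolvent_seq_def by (intro resolvent_eq_0_imp[OF S_sg _ fstar_integrable]) simp_all
  then have "integral\<^sup>L M fstar = 0" by (simp add: integral_eq_zero_AE)
  with fstar_dens show False unfolding is_density_def by simp
qed

lemma invariant_density_exists:
  assumes "stochastic_sg M Pt"
  shows "\<exists>g. is_density M g \<and> (\<forall>t\<ge>0. AE x in M. Pt t g x = g x)"
proof (intro exI conjI allI impI)
  define c where "c = integral\<^sup>L M resolvent_sup_real"
  let ?g = "\<lambda>x. resolvent_sup_real x / c"
  show g: "is_density M ?g"
    unfolding c_def using resolvent_sup_real_integrable resolvent_sup_real_nonneg
      resolvent_sup_real_integral_nonzero by (rule is_density_normalize)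
  fix t :: real assume t: "0 \<le> t"
  have "0 \<le> c" unfolding c_def using resolvent_sup_real_nonneg by (simp add: integral_nonneg)
  then have "0 < c" using resolvent_sup_real_integral_nonzero unfolding c_def by simp
  have "AE x in M. Pt t ?g x = (1 / c) * Pt t resolvent_sup_real x"
    using op_cmult[OF sg_op[OF Pt_sg t] resolvent_sup_real_integrable, of "1 / c"] by simp
  with resolvent_sup_real_subinvariant[OF t] have "AE x in M. Pt t ?g x \<le> ?g x"
    by eventually_elim (use \<open>0 < c\<close> in \<open>simp add: divide_right_mono\<close>)
  moreover have "stochastic_op M (Pt t)" using assms t unfolding stochastic_sg_def by blast
  ultimately show "AE x in M. Pt t ?g x = ?g x"
    using g by (intro stochastic_op_subinvariant_density_invariant)
qed

end

end

end

theorem theorem3p2: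
  fixes M :: "'a measure"
    and P :: "('a \<Rightarrow> real) \<Rightarrow> ('a \<Rightarrow> real)"
    and \<phi> :: "'a \<Rightarrow> real"
    and S Pt :: "real \<Rightarrow> ('a \<Rightarrow> real) \<Rightarrow> ('a \<Rightarrow> real)"
    and K :: "('a \<Rightarrow> real) \<Rightarrow> ('a \<Rightarrow> real)"
    and fstar :: "'a \<Rightarrow> real"
  assumes sf: "sigma_finite_measure M"
    and P_stoch: "stochastic_op M P"
    and phi_meas: "\<phi> \<in> borel_measurable M"
    and phi_nonneg: "\<forall>x\<in>space M. 0 \<le> \<phi> x"
    and S_sg: "substochastic_sg M S"
    and A_dom: "\<forall>f g. has_gen M S f g \<longrightarrow> integrable M (\<lambda>x. \<phi> x * \<bar>f x\<bar>)"
    and A_int: "\<forall>f g. has_gen M S f g \<longrightarrow> (AE x in M. 0 \<le> f x) \<longrightarrow>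
                  integral\<^sup>L M g = - integral\<^sup>L M (\<lambda>x. \<phi> x * f x)"
    and Pt_sg: "substochastic_sg M Pt"
    and Pt_min: "\<forall>l>0. \<forall>f. integrable M f \<longrightarrow>
        l1_lim M (\<lambda>n. resolvent M S l
                    (\<lambda>x. \<Sum>k\<le>n. (((\<lambda>u. P (\<lambda>y. \<phi> y * resolvent M S l u y)) ^^ k) f) x))
               (resolvent M Pt l f) sequentially"
    and K_def: "\<forall>f. integrable M f \<longrightarrow>
        l1_lim M (\<lambda>l. P (\<lambda>y. \<phi> y * resolvent M S l f y)) (K f) (at_right 0)"
    and fstar_dens: "is_density M fstar"
    and fstar_sub: "AE x in M. K fstar x \<le> fstar x"
  shows "subinvariant_sg M Pt (resolvent_sup M S fstar) \<and>
         ((\<integral>\<^sup>+ x. resolvent_sup M S fstar x \<partial>M) < \<infinity> \<longrightarrow> stochastic_sg M Pt \<longrightarrow>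
            (\<exists>g. is_density M g \<and> (\<forall>t\<ge>0. AE x in M. Pt t g x = g x)))"
proof -
  interpret minimal_semigroup M P \<phi> S Pt
    using sf P_stoch phi_meas phi_nonneg S_sg A_dom Pt_sg Pt_min
    by (intro minimal_semigroup.intro) (simp_all add: stochastic_op_def)
  have K: "\<forall>f. integrable M f \<longrightarrow> l1_lim M (\<lambda>l. jump_op l f) (K f) (at_right 0)"
    using K_def by (simp add: jump_op_def)
  show ?thesis
    using resolvent_sup_subinvariant[OF K fstar_dens fstar_sub]
      invariant_density_exists[OF K fstar_dens fstar_sub]
    by blast
qed

end
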